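(* In the setting described in the context, suppose that $(T_{\lambda,\sigma})$ has an elliptic anomaly of first order and $\mathcal K$th kind, and that the basis change $M$ is such that $\mathbf E(p_{\mathcal K,\sigma}(\theta))=\mu$ is a constant (independent of $\theta$), $\mu\neq 0$. Let $\tilde{\mathcal K}>\mathcal K$ be the index of the first $k>\mathcal K$ with $\mathbf E(P_{\eta_k,\sigma})\neq 0$ and $\mathcal K'=\min\{\tilde{\mathcal K},K\}$. Then for every $f\in C^1(S^1_\pi)$, $$I_N(f)=\int_0^\pi\frac{d\theta}{\pi}\,f(\theta)+\mathcal O\big(\lambda^{\eta_{\mathcal K'}-\eta_{\mathcal K}},(\lambda^{\eta_{\mathcal K}}N)^{-1}\big),$$ where the error is bounded by a constant (independent of $N$) times $\lambda^{\eta_{\mathcal K'}-\eta_{\mathcal K}}+(\lambda^{\eta_{\mathcal K}}N)^{-1}$ for small $\lambda>0$.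
   Context: Let $(\Sigma,\mathbf p)$ be a probability space and $(T_{\lambda,\sigma})_{\lambda\in\mathbb R,\sigma\in\Sigma}$ a family in $SL(2,\mathbb R)$, with compact support (uniformly bounded) for small $\lambda$, whose $\lambda$-dependence is a power series with nonnegative (not necessarily integer) exponents. Suppose for a fixed $M\in SL(2,\mathbb R)$ independent of $\lambda,\sigma$: $MT_{\lambda,\sigma}M^{-1}=\pm\exp\big(\sum_{k\ge1}\lambda^{\eta_k}P_{\eta_k,\sigma}\big)$ with $P_{\eta_k,\sigma}\in sl(2,\mathbb R)$, $0<\eta_1<\eta_2<\cdots$, an index $K$ with $\eta_K=2\eta_1$, $\eta_{K+1}\le\eta_1+\eta_2$, and $\mathbf p(P_{\eta_k,\sigma}=0)<1$ for $k=1,\ldots,K-1$. (Then $T_{0,\sigma}=\pm\mathbf 1$: $\lambda=0$ is an anomaly.) The anomaly is of first order and $\mathcal K$th kind if $\mathcal K<K$, $\mathbf E(P_{\eta_k,\sigma})=0$ for $k<\mathcal K$ and $\mathbf E(P_{\eta_{\mathcal K},\sigma})\neq0$; it is elliptic if $\det\mathbf E(P_{\eta_{\mathcal K},\sigma})>0$. For $P_{\eta_k,\sigma}=\begin{pmatrix}a&b\\c&-a\end{pmatrix}$ put $p_{k,\sigma}(\theta)=c\cos^2\theta-b\sin^2\theta-a\sin(2\theta)$. $S^1_\pi=\mathbb R/\pi\mathbb Z$; for $T\in SL(2,\mathbb R)$ the map $\mathcal S_T:S^1_\pi\to S^1_\pi$ is defined by $e_{\mathcal S_T(\theta)}=\pm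 Te_\theta/\|Te_\theta\|$, $e_\theta=(\cos\theta,\sin\theta)^T$; $\mathcal S_{\lambda,\sigma}=\mathcal S_{MT_{\lambda,\sigma}M^{-1}}$. With $(\sigma_n)_{n\ge1}$ i.i.d. of law $\mathbf p$ and $\theta_0\in S^1_\pi$, set $\theta_{n+1}=\mathcal S_{\lambda,\sigma_{n+1}}(\theta_n)$ and, for $\pi$-periodic $f$, $I_N(f)=\frac1N\mathbf E\sum_{n=0}^{N-1}f(\theta_n)$. $\mathbf E$ denotes expectation over the randomness. *)

theory Defs
  imports "HOL-Analysis.Analysis" "HOL-Probability.Probability"
begin

type_synonym mat2 = "real^2^2"

primrec mpow :: "mat2 \<Rightarrow> nat \<Rightarrow> mat2" where
  "mpow A 0 = mat 1"
| "mpow A (Suc n) = A ** mpow A n"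

definition mexp :: "mat2 \<Rightarrow> mat2" where
  "mexp A = (\<Sum>n. (1 / fact n) *\<^sub>R mpow A n)"

definition evec :: "real \<Rightarrow> real^2" where
  "evec \<theta> = vector [cos \<theta>, sin \<theta>]"

text \<open>Projective action S_T on S^1_pi; angles are represented by reals, the
  result is a representative (in (-pi,pi]) of the class mod pi of the angle of T e_theta.\<close>
definition Smap :: "mat2 \<Rightarrow> real \<Rightarrow> real" where
  "Smap A \<theta> = Arg (Complex ((A *v evec \<theta>) $ 1) ((A *v evec \<theta>) $ 2))"

text \<open>p_{k,sigma}(theta) for P = [[a,b],[c,-a]].\<close>
definition pfun :: "mat2 \<Rightarrow> real \<Rightarrow> real" where
  "pfun A \<theta> = A $ 2 $ 1 * (cos \<theta>)\<^sup>2 - A $ 1 $ 2 * (sin \<theta>)\<^sup>2 - A $ 1 $ 1 * sin (2 * \<theta>)"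

primrec theta_seq :: "('s \<Rightarrow> real \<Rightarrow> real) \<Rightarrow> real \<Rightarrow> (nat \<Rightarrow> 's) \<Rightarrow> nat \<Rightarrow> real" where
  "theta_seq S \<theta>0 \<omega> 0 = \<theta>0"
| "theta_seq S \<theta>0 \<omega> (Suc n) = S (\<omega> (Suc n)) (theta_seq S \<theta>0 \<omega> n)"

definition I_N :: "'s measure \<Rightarrow> ('s \<Rightarrow> real \<Rightarrow> real) \<Rightarrow> real \<Rightarrow> (real \<Rightarrow> real) \<Rightarrow> nat \<Rightarrow> real" where
  "I_N p S \<theta>0 f N = (1 / real N) *
     (\<Sum>n<N. integral\<^sup>L (PiM UNIV (\<lambda>_. p)) (\<lambda>\<omega>. f (theta_seq S \<theta>0 \<omega> n)))"

end

(*
  Let Q be the transition operator of the chain of directions and m the mean of f.  Since f - m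
  has mean zero over a period, g' = (f - m) / mu has a pi-periodic solution g.  Expanding the
  projective action of +-exp X to second order, Q g - g = lam^eta_Kc (f - m) + O(lam^eta_K'):
  below K' the only term of X with nonzero mean is lam^eta_Kc P_Kc, whose mean angular speed is
  the constant mu, and the quadratic terms are O(lam^(2 eta_1)) = O(lam^eta_K).  Summed along the
  orbit the left-hand side telescopes, so
  N lam^eta_Kc (I_N(f) - m) = E g(theta_N) - g(theta_0) + O(N lam^eta_K').
*)
theory Submission
  imports Defs
begin

section \<open>Near-identity matrices acting on directions\<close>

(* The entrywise l1 norm: unlike the Euclidean norm of real^2^2 it is visibly submultiplicative. *)
definition norm1 :: "mat2 \<Rightarrow> real" where
  "norm1 A = (\<Sum>i\<in>UNIV. \<Sum>j\<in>UNIV. \<bar>A $ i $ j\<bar>)"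

lemma norm1_expand: "norm1 A = \<bar>A$1$1\<bar> + \<bar>A$1$2\<bar> + \<bar>A$2$1\<bar> + \<bar>A$2$2\<bar>"
  by (simp add: norm1_def sum_2)

lemma norm1_nonneg: "0 \<le> norm1 A"
  by (simp add: norm1_expand)

lemma norm1_le_norm: "norm1 A \<le> 4 * norm A"
proof -
  have "\<bar>A $ i $ j\<bar> \<le> norm A" for i j
    using component_le_norm_cart[of "A $ i" j] Finite_Cartesian_Product.norm_nth_le[of A i] by linarith
  from this[of 1 1] this[of 1 2] this[of 2 1] this[of 2 2] show ?thesis
    by (simp add: norm1_expand)
qed

lemma norm_le_norm1: "norm A \<le> norm1 A"
proof -
  have "norm A \<le> (\<Sum>i\<in>UNIV. norm (A $ i))"
    unfolding norm_vec_def by (rule L2_set_le_sum) simp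
  also have "\<dots> \<le> (\<Sum>i\<in>UNIV. \<Sum>j\<in>UNIV. \<bar>A $ i $ j\<bar>)"
    by (intro sum_mono norm_le_l1_cart)
  finally show ?thesis by (simp add: norm1_def)
qed

lemma norm1_triangle: "norm1 (A + B) \<le> norm1 A + norm1 B"
  using abs_triangle_ineq[of "A$1$1" "B$1$1"] abs_triangle_ineq[of "A$1$2" "B$1$2"]
    abs_triangle_ineq[of "A$2$1" "B$2$1"] abs_triangle_ineq[of "A$2$2" "B$2$2"]
  by (simp add: norm1_expand)

lemma norm1_scaleR: "norm1 (c *\<^sub>R A) = \<bar>c\<bar> * norm1 A"
  by (simp add: norm1_expand abs_mult algebra_simps)

lemma norm1_mat1: "norm1 (mat 1) = 2"
  by (simp add: norm1_expand mat_def)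

lemma norm1_mult: "norm1 (A ** B) \<le> norm1 A * norm1 B"
proof -
  have "norm1 (A ** B) = (\<Sum>i\<in>UNIV. \<Sum>j\<in>UNIV. \<bar>\<Sum>k\<in>UNIV. A$i$k * B$k$j\<bar>)"
    by (simp add: norm1_def matrix_matrix_mult_def)
  also have "\<dots> \<le> (\<Sum>i\<in>UNIV. \<Sum>j\<in>UNIV. \<Sum>k\<in>UNIV. \<bar>A$i$k\<bar> * \<bar>B$k$j\<bar>)"
    by (intro sum_mono) (simp add: order.trans[OF sum_abs] abs_mult)
  also have "\<dots> = (\<Sum>i\<in>UNIV. \<Sum>k\<in>UNIV. \<bar>A$i$k\<bar> * (\<Sum>j\<in>UNIV. \<bar>B$k$j\<bar>))"
    by (simp add: sum_distrib_left) (rule sum.cong[OF refl], rule sum.swap)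
  also have "\<dots> \<le> (\<Sum>i\<in>UNIV. \<Sum>k\<in>UNIV. \<bar>A$i$k\<bar> * norm1 B)"
    by (intro sum_mono mult_left_mono) (auto simp: norm1_def intro: member_le_sum)
  also have "\<dots> = norm1 A * norm1 B"
    by (simp add: norm1_def sum_distrib_right)
  finally show ?thesis .
qed

lemma norm1_mpow: "norm1 (mpow X n) \<le> 2 * norm1 X ^ n"
proof (induction n)
  case 0
  then show ?case by (simp add: norm1_mat1)
next
  case (Suc n)
  have "norm1 (mpow X (Suc n)) \<le> norm1 X * norm1 (mpow X n)"
    by (simp add: norm1_mult)
  also have "\<dots> \<le> norm1 X * (2 * norm1 X ^ n)"
    by (intro mult_left_mono Suc norm1_nonneg)
  finally show ?case by (simp add: algebra_simps)
qed

lemma norm_mexp_term_le: "norm ((1 / fact n) *\<^sub>R mpow X n) \<le> 2 * (norm1 X ^ n / fact n)"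
proof -
  have "norm ((1 / fact n) *\<^sub>R mpow X n) \<le> (1 / fact n) * norm1 (mpow X n)"
    using norm_le_norm1[of "(1 / fact n) *\<^sub>R mpow X n"] by (simp add: norm1_scaleR)
  also have "\<dots> \<le> (1 / fact n) * (2 * norm1 X ^ n)"
    by (intro mult_left_mono norm1_mpow) simp
  finally show ?thesis by simp
qed

lemma mexp_second_order:
  assumes "norm1 X \<le> 1"
  obtains R where "mexp X = mat 1 + X + R" "norm1 R \<le> 24 * (norm1 X)\<^sup>2"
proof -
  define r where "r = norm1 X"
  define F where "F n = (1 / fact n) *\<^sub>R mpow X n" for n
  have r: "0 \<le> r" "r \<le> 1" using assms by (simp_all add: r_def norm1_nonneg)
  have exp_summable: "summable (\<lambda>n. r ^ n / fact n)"
    using summable_exp_generic[of r] by (simp add: divide_inverse mult.commute)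
  have F_le: "norm (F n) \<le> 2 * (r ^ n / fact n)" for n
    unfolding F_def r_def by (rule norm_mexp_term_le)
  have F_summable: "summable (\<lambda>n. norm (F n))"
    by (rule summable_comparison_test[OF _ summable_mult[OF exp_summable]]) (use F_le in auto)
  then have tail_summable: "summable (\<lambda>n. norm (F (n + 2)))"
    using summable_iff_shift[of "\<lambda>n. norm (F n)" 2] by blast
  define R where "R = (\<Sum>n. F (n + 2))"
  have "mexp X = R + (\<Sum>i<2. F i)"
    unfolding mexp_def R_def F_def[symmetric]
    by (rule suminf_split_initial_segment[OF summable_norm_cancel[OF F_summable]])
  then have split: "mexp X = mat 1 + X + R"
    by (simp add: F_def numeral_2_eq_2)
  have tail_le: "norm (F (n + 2)) \<le> (2 * r\<^sup>2) * (r ^ n / fact n)" for n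
  proof -
    have "fact n \<le> (fact (n + 2) :: real)" by (intro fact_mono) auto
    then have "r ^ n / fact (n + 2) \<le> r ^ n / fact n"
      using r by (intro divide_left_mono) auto
    then have "(2 * r\<^sup>2) * (r ^ n / fact (n + 2)) \<le> (2 * r\<^sup>2) * (r ^ n / fact n)"
      by (rule mult_left_mono) simp
    moreover have "2 * (r ^ (n + 2) / fact (n + 2)) = (2 * r\<^sup>2) * (r ^ n / fact (n + 2))"
      by (simp add: power_add power2_eq_square)
    ultimately show ?thesis using F_le[of "n + 2"] by linarith
  qed
  have "norm R \<le> (\<Sum>n. norm (F (n + 2)))"
    unfolding R_def by (rule summable_norm[OF tail_summable])
  also have "\<dots> \<le> (\<Sum>n. (2 * r\<^sup>2) * (r ^ n / fact n))"
    using tail_le by (intro suminf_le[OF _ tail_summable summable_mult[OF exp_summable]])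
  also have "\<dots> = (2 * r\<^sup>2) * exp r"
    using suminf_mult[OF exp_summable, of "2 * r\<^sup>2"] by (simp add: exp_def divide_inverse mult.commute)
  also have "\<dots> \<le> (2 * r\<^sup>2) * 3"
    using r exp_le by (intro mult_left_mono) (auto intro: order_trans[of _ "exp 1"])
  finally have "norm1 R \<le> 24 * r\<^sup>2"
    using norm1_le_norm[of R] by simp
  with split show ?thesis unfolding r_def by (rule that)
qed

(* Writing B e_t = rad_part B t * e_t + ang_part B t * e_t', with e_t' the unit normal,
   ang_part B t is the angular speed at t of the flow of B on directions. *)
definition ang_part :: "mat2 \<Rightarrow> real \<Rightarrow> real" where
  "ang_part B t = B$2$1 * (cos t)\<^sup>2 - B$1$2 * (sin t)\<^sup>2 + (B$2$2 - B$1$1) * (sin t * cos t)"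

definition rad_part :: "mat2 \<Rightarrow> real \<Rightarrow> real" where
  "rad_part B t = B$1$1 * (cos t)\<^sup>2 + (B$1$2 + B$2$1) * (sin t * cos t) + B$2$2 * (sin t)\<^sup>2"

lemma ang_part_eq_pfun:
  assumes "trace A = 0"
  shows "ang_part A t = pfun A t"
proof -
  have "A$2$2 = - A$1$1" using assms by (simp add: trace_def sum_2)
  moreover have "sin (2 * t) = 2 * sin t * cos t" by (rule sin_double)
  ultimately show ?thesis by (simp add: ang_part_def pfun_def algebra_simps)
qed

lemma trig_coeff_bound: "\<bar>a * (cos (t::real))\<^sup>2\<bar> \<le> \<bar>a\<bar>" "\<bar>a * (sin t)\<^sup>2\<bar> \<le> \<bar>a\<bar>" "\<bar>a * (sin t * cos t)\<bar> \<le> \<bar>a\<bar>"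
proof -
  have "\<bar>(cos t)\<^sup>2\<bar> \<le> 1" by (simp add: abs_square_le_1)
  moreover have "\<bar>(sin t)\<^sup>2\<bar> \<le> 1" by (simp add: abs_square_le_1)
  moreover have "\<bar>sin t * cos t\<bar> \<le> 1" by (simp add: abs_mult mult_le_one)
  ultimately show "\<bar>a * (cos t)\<^sup>2\<bar> \<le> \<bar>a\<bar>" "\<bar>a * (sin t)\<^sup>2\<bar> \<le> \<bar>a\<bar>" "\<bar>a * (sin t * cos t)\<bar> \<le> \<bar>a\<bar>"
    by (simp_all only: abs_mult mult_left_le abs_ge_zero)
qed

lemma ang_part_bound: "\<bar>ang_part B t\<bar> \<le> norm1 B"
proof -
  have "\<bar>ang_part B t\<bar> \<le> \<bar>B$2$1 * (cos t)\<^sup>2\<bar> + \<bar>B$1$2 * (sin t)\<^sup>2\<bar>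
      + \<bar>B$2$2 * (sin t * cos t)\<bar> + \<bar>B$1$1 * (sin t * cos t)\<bar>"
    unfolding ang_part_def by (simp add: algebra_simps)
  also have "\<dots> \<le> norm1 B"
    using trig_coeff_bound(1)[of "B$2$1" t] trig_coeff_bound(2)[of "B$1$2" t]
      trig_coeff_bound(3)[of "B$2$2" t] trig_coeff_bound(3)[of "B$1$1" t]
    by (simp add: norm1_expand)
  finally show ?thesis .
qed

lemma rad_part_bound: "\<bar>rad_part B t\<bar> \<le> norm1 B"
proof -
  have "\<bar>rad_part B t\<bar> \<le> \<bar>B$1$1 * (cos t)\<^sup>2\<bar> + \<bar>B$1$2 * (sin t * cos t)\<bar>
      + \<bar>B$2$1 * (sin t * cos t)\<bar> + \<bar>B$2$2 * (sin t)\<^sup>2\<bar>"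
    unfolding rad_part_def by (simp add: algebra_simps)
  also have "\<dots> \<le> norm1 B"
    using trig_coeff_bound(1)[of "B$1$1" t] trig_coeff_bound(2)[of "B$2$2" t]
      trig_coeff_bound(3)[of "B$1$2" t] trig_coeff_bound(3)[of "B$2$1" t]
    by (simp add: norm1_expand)
  finally show ?thesis .
qed

lemma ang_part_add: "ang_part (A + B) t = ang_part A t + ang_part B t"
  by (simp add: ang_part_def algebra_simps)

lemma ang_part_scaleR: "ang_part (c *\<^sub>R A) t = c * ang_part A t"
  by (simp add: ang_part_def algebra_simps)

lemma bounded_linear_ang_part: "bounded_linear (\<lambda>A. ang_part A t)"
proof (rule bounded_linear_intro[where K=4])
  show "norm (ang_part A t) \<le> norm A * 4" for A
    using ang_part_bound[of A t] norm1_le_norm[of A] by simp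
qed (simp_all add: ang_part_add ang_part_scaleR)

lemma id_plus_evec_as_complex:
  "Complex (((mat 1 + B) *v evec t) $ 1) (((mat 1 + B) *v evec t) $ 2)
     = cis t * Complex (1 + rad_part B t) (ang_part B t)"
proof -
  \<comment> \<open>Stated for abstract \<open>c\<close>, \<open>s\<close> so that \<open>sin\<^sup>2 + cos\<^sup>2 = 1\<close> is only used afterwards.\<close>
  have ring: "c * (1 + (a * c\<^sup>2 + (b + d) * (s * c) + e * s\<^sup>2)) - s * (d * c\<^sup>2 - b * s\<^sup>2 + (e - a) * (s * c))
      = (1 + a) * c + b * s + (s\<^sup>2 + c\<^sup>2 - 1) * (a * c + b * s)"
    "s * (1 + (a * c\<^sup>2 + (b + d) * (s * c) + e * s\<^sup>2)) + c * (d * c\<^sup>2 - b * s\<^sup>2 + (e - a) * (s * c))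
      = d * c + (1 + e) * s + (s\<^sup>2 + c\<^sup>2 - 1) * (d * c + e * s)" for a b c d e s :: real
    by (simp_all add: algebra_simps power2_eq_square)
  have "cos t * (1 + rad_part B t) - sin t * ang_part B t = (1 + B$1$1) * cos t + B$1$2 * sin t"
    and "sin t * (1 + rad_part B t) + cos t * ang_part B t = B$2$1 * cos t + (1 + B$2$2) * sin t"
    unfolding rad_part_def ang_part_def ring by simp_all
  moreover have "((mat 1 + B) *v evec t) $ 1 = (1 + B$1$1) * cos t + B$1$2 * sin t"
    and "((mat 1 + B) *v evec t) $ 2 = B$2$1 * cos t + (1 + B$2$2) * sin t"
    by (simp_all add: matrix_vector_mult_def sum_2 evec_def mat_def algebra_simps)
  ultimately show ?thesis
    by (simp add: complex_eq_iff)
qed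

lemma Smap_sign_id_plus:
  assumes s: "s \<in> {1, -1}" and small: "norm1 B \<le> 1/2"
  obtains j :: int where
    "Smap (s *\<^sub>R (mat 1 + B)) t = t + arctan (ang_part B t / (1 + rad_part B t)) + j * pi"
proof -
  define \<zeta> where "\<zeta> = Complex (1 + rad_part B t) (ang_part B t)"
  have Re_\<zeta>: "Re \<zeta> > 0" using rad_part_bound[of B t] small by (simp add: \<zeta>_def)
  then have \<zeta>0: "\<zeta> \<noteq> 0" by auto
  have Arg_\<zeta>: "Arg \<zeta> = arctan (ang_part B t / (1 + rad_part B t))"
    using arg_conv_arctan[OF Re_\<zeta>] by (simp add: \<zeta>_def)
  define c where "c = (if s = 1 then 0 else pi)"
  have s_cis: "complex_of_real s = cis c"
    using s by (auto simp: c_def)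
  define z where "z = cis c * cis t * \<zeta>"
  have "Complex ((s *\<^sub>R (mat 1 + B) *v evec t) $ 1) ((s *\<^sub>R (mat 1 + B) *v evec t) $ 2)
      = complex_of_real s * Complex (((mat 1 + B) *v evec t) $ 1) (((mat 1 + B) *v evec t) $ 2)"
    by (simp add: scaleR_matrix_vector_assoc[symmetric] complex_eq_iff)
  then have Smap_eq: "Smap (s *\<^sub>R (mat 1 + B)) t = Arg z"
    unfolding Smap_def z_def \<zeta>_def id_plus_evec_as_complex s_cis by (simp only: mult.assoc)
  have "z \<noteq> 0" using \<zeta>0 by (simp add: z_def)
  then have "cis (Arg z) = sgn z" by (rule cis_Arg)
  also have "\<dots> = cis c * cis t * cis (Arg \<zeta>)"
    unfolding z_def sgn_mult sgn_cis cis_Arg[OF \<zeta>0] ..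
  also have "\<dots> = cis (t + Arg \<zeta> + c)"
    by (simp add: cis_mult algebra_simps)
  finally have cis_eq: "cis (Arg z) = cis (t + Arg \<zeta> + c)" .
  have "sin (Arg z) = sin (t + Arg \<zeta> + c) \<and> cos (Arg z) = cos (t + Arg \<zeta> + c)"
    using arg_cong[OF cis_eq, of Re] arg_cong[OF cis_eq, of Im] by simp
  then obtain n :: int where "Arg z = t + Arg \<zeta> + c + 2 * pi * n"
    unfolding sin_cos_eq_iff by blast
  then show ?thesis
    using Arg_\<zeta> Smap_eq by (intro that[of "2 * n + (if s = 1 then 0 else 1)"]) (auto simp: c_def algebra_simps)
qed

lemma abs_arctan_minus_le: "\<bar>u\<bar> \<le> 1 \<Longrightarrow> \<bar>arctan u - u\<bar> \<le> u\<^sup>2"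
proof -
  assume u: "\<bar>u\<bar> \<le> 1"
  have "norm ((arctan u - u) - (arctan 0 - 0)) \<le> u\<^sup>2 * norm (u - 0)"
  proof (rule field_differentiable_bound[OF convex_closed_segment,
        where f = "\<lambda>t. arctan t - t" and f' = "\<lambda>z. inverse (1 + z\<^sup>2) - 1"])
    fix z assume z: "z \<in> closed_segment 0 u"
    show "((\<lambda>t. arctan t - t) has_field_derivative inverse (1 + z\<^sup>2) - 1) (at z within closed_segment 0 u)"
      by (auto intro!: derivative_eq_intros)
    have "\<bar>z\<bar> \<le> \<bar>u\<bar>"
      using z by (auto simp: closed_segment_eq_real_ivl split: if_splits)
    then have "z\<^sup>2 \<le> u\<^sup>2"
      by (simp add: abs_le_square_iff)
    moreover have pos: "0 < 1 + z\<^sup>2" by (simp add: add_pos_nonneg)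
    then have "inverse (1 + z\<^sup>2) - 1 = - (z\<^sup>2 / (1 + z\<^sup>2))"
      by (simp add: field_simps)
    moreover have "z\<^sup>2 / (1 + z\<^sup>2) \<le> z\<^sup>2"
      using pos by (simp add: divide_le_eq) (simp add: mult_le_cancel_left1 algebra_simps)
    ultimately show "norm (inverse (1 + z\<^sup>2) - 1) \<le> u\<^sup>2"
      by simp
  qed auto
  then have "\<bar>arctan u - u\<bar> \<le> u\<^sup>2 * \<bar>u\<bar>" by simp
  also have "\<dots> \<le> u\<^sup>2" using u by (simp add: mult_left_le)
  finally show ?thesis .
qed

lemma arctan_ratio_approx:
  assumes "\<bar>x\<bar> \<le> r" "\<bar>y\<bar> \<le> r" "r \<le> 1/2"
  shows "\<bar>arctan (y / (1 + x)) - y\<bar> \<le> 6 * r\<^sup>2"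
proof -
  have den: "1 + x \<ge> 1/2" using assms by linarith
  define u where "u = y / (1 + x)"
  have "\<bar>u\<bar> = \<bar>y\<bar> / (1 + x)" using den by (simp add: u_def abs_divide)
  also have "\<dots> \<le> \<bar>y\<bar> / (1/2)" using den by (intro divide_left_mono) auto
  finally have u_le: "\<bar>u\<bar> \<le> 2 * r" using assms by simp
  have "\<bar>u - y\<bar> = \<bar>y\<bar> * \<bar>x\<bar> / (1 + x)"
    using den by (simp add: u_def field_simps abs_mult abs_divide abs_minus_commute)
  also have "\<dots> \<le> \<bar>y\<bar> * \<bar>x\<bar> / (1/2)" using den by (intro divide_left_mono) auto
  also have "\<dots> \<le> 2 * r\<^sup>2"
    using mult_mono[OF assms(2,1)] assms(1) by (simp add: power2_eq_square)
  finally have "\<bar>u - y\<bar> \<le> 2 * r\<^sup>2" .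
  moreover have "\<bar>arctan u - u\<bar> \<le> 4 * r\<^sup>2"
  proof -
    have "\<bar>arctan u - u\<bar> \<le> u\<^sup>2" using u_le assms(3) by (intro abs_arctan_minus_le) auto
    also have "\<dots> \<le> (2 * r)\<^sup>2" using power_mono[OF u_le, of 2] by simp
    finally show ?thesis by (simp add: power_mult_distrib)
  qed
  ultimately show ?thesis unfolding u_def by linarith
qed

lemma Smap_sign_mexp:
  assumes s: "s \<in> {1, -1}" and small: "norm1 X \<le> 1/50"
  obtains j :: int and \<delta> where "Smap (s *\<^sub>R mexp X) t = t + \<delta> + j * pi"
    "\<bar>\<delta> - ang_part X t\<bar> \<le> 40 * (norm1 X)\<^sup>2" "\<bar>\<delta>\<bar> \<le> 2 * norm1 X"
proof -
  define x where "x = norm1 X"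
  have x0: "0 \<le> x" and x1: "x \<le> 1/50" using small by (simp_all add: x_def norm1_nonneg)
  have xx: "x\<^sup>2 \<le> x / 50"
    using mult_left_mono[OF x1 x0] by (simp add: power2_eq_square)
  obtain R where R: "mexp X = mat 1 + X + R" "norm1 R \<le> 24 * x\<^sup>2"
    using mexp_second_order[of X] small unfolding x_def by auto
  define B where "B = X + R"
  have "norm1 B \<le> x + 24 * x\<^sup>2" using norm1_triangle[of X R] R(2) by (simp add: B_def x_def)
  then have B_le: "norm1 B \<le> 3/2 * x" using xx x0 by linarith
  then have B_half: "norm1 B \<le> 1/2" using x1 by linarith
  define \<delta> where "\<delta> = arctan (ang_part B t / (1 + rad_part B t))"
  obtain j :: int where j: "Smap (s *\<^sub>R mexp X) t = t + \<delta> + j * pi"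
    using Smap_sign_id_plus[OF s B_half, of t] R(1) unfolding \<delta>_def B_def by (metis add.assoc)
  have "\<bar>\<delta> - ang_part B t\<bar> \<le> 6 * (norm1 B)\<^sup>2"
    unfolding \<delta>_def using rad_part_bound ang_part_bound B_half by (rule arctan_ratio_approx)
  also have "\<dots> \<le> 6 * (3/2 * x)\<^sup>2"
    using B_le norm1_nonneg[of B] by (intro mult_left_mono power_mono) auto
  also have "\<dots> \<le> 14 * x\<^sup>2" by (simp add: power2_eq_square)
  finally have "\<bar>\<delta> - ang_part B t\<bar> \<le> 14 * x\<^sup>2" .
  moreover have "\<bar>ang_part R t\<bar> \<le> 24 * x\<^sup>2" using ang_part_bound[of R t] R(2) by linarith
  ultimately have close: "\<bar>\<delta> - ang_part X t\<bar> \<le> 40 * x\<^sup>2"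
    unfolding B_def ang_part_add by linarith
  moreover have "\<bar>ang_part X t\<bar> \<le> x" using ang_part_bound[of X t] by (simp add: x_def)
  ultimately have "\<bar>\<delta>\<bar> \<le> 2 * x" using xx by linarith
  with j close show ?thesis unfolding x_def by (rule that)
qed

lemma powr_series_tail_bound:
  fixes a :: "nat \<Rightarrow> real" and Q :: "nat \<Rightarrow> 'a::real_normed_vector"
  assumes lam0: "0 < lam0" and lam: "0 < lam" "lam \<le> lam0"
    and summable: "summable (\<lambda>k. lam0 powr a k * norm (Q k))"
    and sum_le: "(\<Sum>k. lam0 powr a k * norm (Q k)) \<le> B"
    and b: "\<And>k. b \<le> a (k + j)"
  shows "summable (\<lambda>k. norm (lam powr a (k + j) *\<^sub>R Q (k + j)))"
    and "(\<Sum>k. norm (lam powr a (k + j) *\<^sub>R Q (k + j))) \<le> (lam / lam0) powr b * B"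
proof -
  define q where "q = lam / lam0"
  have q: "0 < q" "q \<le> 1" using lam0 lam by (auto simp: q_def)
  have shifted: "summable (\<lambda>k. lam0 powr a (k + j) * norm (Q (k + j)))"
    using summable summable_iff_shift[of "\<lambda>k. lam0 powr a k * norm (Q k)" j] by blast
  have le: "norm (lam powr a (k + j) *\<^sub>R Q (k + j)) \<le> q powr b * (lam0 powr a (k + j) * norm (Q (k + j)))" for k
  proof -
    have "norm (lam powr a (k + j) *\<^sub>R Q (k + j)) = q powr a (k + j) * (lam0 powr a (k + j) * norm (Q (k + j)))"
      using lam0 lam by (simp add: q_def powr_divide mult.assoc)
    also have "\<dots> \<le> q powr b * (lam0 powr a (k + j) * norm (Q (k + j)))"
      using q b[of k] by (intro mult_right_mono powr_mono') auto
    finally show ?thesis .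
  qed
  show s: "summable (\<lambda>k. norm (lam powr a (k + j) *\<^sub>R Q (k + j)))"
    by (rule summable_comparison_test[OF _ summable_mult[OF shifted]]) (use le in auto)
  have "(\<Sum>k. norm (lam powr a (k + j) *\<^sub>R Q (k + j))) \<le> q powr b * (\<Sum>k. lam0 powr a (k + j) * norm (Q (k + j)))"
    using suminf_le[OF le s summable_mult[OF shifted]] suminf_mult[OF shifted] by simp
  also have "\<dots> \<le> q powr b * B"
  proof -
    have "(\<Sum>k. lam0 powr a (k + j) * norm (Q (k + j))) \<le> (\<Sum>k. lam0 powr a k * norm (Q k))"
      using suminf_split_initial_segment[OF summable, of j] by (simp add: sum_nonneg)
    then show ?thesis using sum_le by (intro mult_left_mono) auto
  qed
  finally show "(\<Sum>k. norm (lam powr a (k + j) *\<^sub>R Q (k + j))) \<le> (lam / lam0) powr b * B"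
    by (simp add: q_def)
qed

lemma powr_series_bounds:
  fixes a :: "nat \<Rightarrow> real" and Q :: "nat \<Rightarrow> mat2"
  assumes lam0: "0 < lam0" and lam: "0 < lam" "lam \<le> lam0"
    and summable: "summable (\<lambda>k. lam0 powr a k * norm (Q k))"
    and sum_le: "(\<Sum>k. lam0 powr a k * norm (Q k)) \<le> B"
    and a_min: "\<And>k. a 0 \<le> a k" and a_tail: "\<And>k. n \<le> k \<Longrightarrow> e \<le> a k"
  shows "norm1 (\<Sum>k. lam powr a k *\<^sub>R Q k) \<le> 4 * (lam / lam0) powr a 0 * B"
    and "\<bar>ang_part (\<Sum>k. lam powr a k *\<^sub>R Q k) t - (\<Sum>k<n. lam powr a k * ang_part (Q k) t)\<bar>
           \<le> 4 * (lam / lam0) powr e * B"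
proof -
  have full: "summable (\<lambda>k. norm (lam powr a k *\<^sub>R Q k))"
    "(\<Sum>k. norm (lam powr a k *\<^sub>R Q k)) \<le> (lam / lam0) powr a 0 * B"
    using powr_series_tail_bound[OF lam0 lam summable sum_le, of "a 0" 0] a_min by simp_all
  note tail = powr_series_tail_bound[OF lam0 lam summable sum_le, of e n, OF a_tail[OF le_add2]]
  have "norm (\<Sum>k. lam powr a k *\<^sub>R Q k) \<le> (lam / lam0) powr a 0 * B"
    using order_trans[OF summable_norm[OF full(1)] full(2)] .
  then show "norm1 (\<Sum>k. lam powr a k *\<^sub>R Q k) \<le> 4 * (lam / lam0) powr a 0 * B"
    using norm1_le_norm[of "\<Sum>k. lam powr a k *\<^sub>R Q k"] by simp
  define c where "c k = lam powr a k * ang_part (Q k) t" for k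
  have c_le: "\<bar>c k\<bar> \<le> 4 * norm (lam powr a k *\<^sub>R Q k)" for k
    using ang_part_bound[of "lam powr a k *\<^sub>R Q k" t] norm1_le_norm[of "lam powr a k *\<^sub>R Q k"]
    by (simp add: c_def ang_part_scaleR)
  have c_tail_summable: "summable (\<lambda>k. \<bar>c (k + n)\<bar>)"
    by (rule summable_comparison_test[OF _ summable_mult[OF tail(1), of 4]]) (use c_le in auto)
  have "ang_part (\<Sum>k. lam powr a k *\<^sub>R Q k) t = (\<Sum>k. c k)"
    using bounded_linear.suminf[OF bounded_linear_ang_part summable_norm_cancel[OF full(1)]]
    by (simp add: c_def ang_part_scaleR)
  also have "\<dots> = (\<Sum>k. c (k + n)) + (\<Sum>k<n. c k)"
    using summable_norm_cancel[of "\<lambda>k. c (k + n)"] c_tail_summable summable_iff_shift[of c n]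
    by (intro suminf_split_initial_segment) simp
  finally have "\<bar>ang_part (\<Sum>k. lam powr a k *\<^sub>R Q k) t - (\<Sum>k<n. c k)\<bar> = \<bar>\<Sum>k. c (k + n)\<bar>" by simp
  also have "\<dots> \<le> (\<Sum>k. \<bar>c (k + n)\<bar>)"
    using summable_norm[of "\<lambda>k. c (k + n)"] c_tail_summable by simp
  also have "\<dots> \<le> (\<Sum>k. 4 * norm (lam powr a (k + n) *\<^sub>R Q (k + n)))"
    using c_le by (intro suminf_le[OF _ c_tail_summable summable_mult[OF tail(1)]]) auto
  also have "\<dots> \<le> 4 * ((lam / lam0) powr e * B)"
    using suminf_mult[OF tail(1), of 4] tail(2) by simp
  finally show "\<bar>ang_part (\<Sum>k. lam powr a k *\<^sub>R Q k) t - (\<Sum>k<n. lam powr a k * ang_part (Q k) t)\<bar>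
      \<le> 4 * (lam / lam0) powr e * B"
    by (simp add: c_def)
qed

section \<open>Periodic functions and the corrector\<close>

lemma periodic_shift_int:
  assumes "\<And>u. g (u + pi) = g u"
  shows "g (u + of_int j * pi) = g u"
proof -
  have nat_shift: "g (v + real n * pi) = g v" for v n
  proof (induction n)
    case (Suc n)
    have "g (v + real (Suc n) * pi) = g ((v + real n * pi) + pi)" by (simp add: algebra_simps)
    with Suc show ?case by (simp only: assms)
  qed simp
  show ?thesis
  proof (cases "j \<ge> 0")
    case True
    then show ?thesis using nat_shift[of u "nat j"] by simp
  next
    case False
    then show ?thesis using nat_shift[of "u + of_int j * pi" "nat (- j)"] by simp
  qed
qed

lemma periodic_continuous_bounded:
  fixes \<phi> :: "real \<Rightarrow> real"
  assumes "continuous_on UNIV \<phi>" and per: "\<And>u. \<phi> (u + pi) = \<phi> u"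
  obtains C where "\<And>u. \<bar>\<phi> u\<bar> \<le> C"
proof -
  have "compact (\<phi> ` {0..pi})"
    using assms(1) by (intro compact_continuous_image) (auto intro: continuous_on_subset)
  then obtain C where C: "\<And>y. y \<in> \<phi> ` {0..pi} \<Longrightarrow> \<bar>y\<bar> \<le> C"
    using compact_imp_bounded bounded_iff real_norm_def by metis
  have "\<bar>\<phi> u\<bar> \<le> C" for u
  proof -
    define j where "j = \<lfloor>u / pi\<rfloor>"
    have "of_int j * pi \<le> u" "u < (of_int j + 1) * pi"
      using floor_divide_lower[of pi u] floor_divide_upper[of pi u] by (simp_all add: j_def)
    then have "u - of_int j * pi \<in> {0..pi}" by (simp add: algebra_simps)
    moreover have "\<phi> u = \<phi> (u - of_int j * pi)"
      using periodic_shift_int[where g = \<phi>, OF per, of "u - of_int j * pi" j] by simp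
    ultimately show ?thesis using C by auto
  qed
  then show ?thesis by (rule that)
qed

lemma C1_periodic_lipschitz:
  fixes f :: "real \<Rightarrow> real"
  assumes "f C1_differentiable_on UNIV" and per: "\<And>u. f (u + pi) = f u"
  obtains L where "\<And>a b. \<bar>f a - f b\<bar> \<le> L * \<bar>a - b\<bar>"
proof -
  define f' where "f' x = vector_derivative f (at x)" for x
  have "\<And>x. f differentiable at x" and f'_cont: "continuous_on UNIV f'"
    using assms(1) unfolding C1_differentiable_on_eq f'_def by auto
  then have f_deriv: "(f has_real_derivative f' x) (at x)" for x
    by (simp add: f'_def has_real_derivative_iff_has_vector_derivative vector_derivative_works)
  have f'_per: "f' (u + pi) = f' u" for u
  proof -
    have "((\<lambda>x. f (x + pi)) has_real_derivative f' (u + pi) * 1) (at u)"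
      by (rule DERIV_chain2[OF f_deriv]) (auto intro!: derivative_eq_intros)
    then show ?thesis using per f_deriv[of u] by (simp add: DERIV_unique)
  qed
  obtain L where L: "\<And>u. \<bar>f' u\<bar> \<le> L"
    using periodic_continuous_bounded[OF f'_cont f'_per] by blast
  have "norm (f a - f b) \<le> L * norm (a - b)" for a b
  proof (rule field_differentiable_bound[OF convex_UNIV])
    show "(f has_field_derivative f' z) (at z within UNIV)" for z by (rule f_deriv)
  qed (use L in auto)
  then have "\<bar>f a - f b\<bar> \<le> L * \<bar>a - b\<bar>" for a b by simp
  then show ?thesis by (rule that)
qed

lemma periodic_corrector:
  fixes f :: "real \<Rightarrow> real" and \<mu> :: real
  assumes f_cont: "continuous_on UNIV f" and per: "\<And>u. f (u + pi) = f u"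
  defines "m \<equiv> integral {0..pi} (\<lambda>\<theta>. f \<theta> / pi)"
  obtains g where "\<And>u. (g has_real_derivative (f u - m) / \<mu>) (at u)" "\<And>u. g (u + pi) = g u"
proof -
  define h where "h u = (f u - m) / \<mu>" for u
  have "continuous_on UNIV h"
    unfolding h_def divide_inverse by (intro continuous_on_mult_right continuous_on_diff f_cont continuous_on_const)
  then obtain g where "\<And>x. (g has_vector_derivative h x) (at x)"
    using einterval_antiderivative[of "-\<infinity>" "\<infinity>" h] by (auto simp: continuous_on_eq_continuous_at)
  then have g: "\<And>x. (g has_real_derivative h x) (at x)"
    by (simp add: has_real_derivative_iff_has_vector_derivative)
  have "(h has_integral (g pi - g 0)) {0..pi}"
    using g by (intro fundamental_theorem_of_calculus)
      (auto simp: has_real_derivative_iff_has_vector_derivative intro: has_vector_derivative_at_within)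
  moreover have "(h has_integral 0) {0..pi}"
  proof -
    have "(f has_integral integral {0..pi} f) {0..pi}"
      using f_cont by (intro integrable_integral integrable_continuous_real) (auto intro: continuous_on_subset)
    moreover have "m = integral {0..pi} f / pi" by (simp add: m_def)
    ultimately have "((\<lambda>u. f u - m) has_integral 0) {0..pi}"
      using has_integral_diff[OF _ has_integral_const_real[of m 0 pi]] by fastforce
    from has_integral_divide[OF this, of \<mu>] show ?thesis by (simp add: h_def[abs_def])
  qed
  ultimately have g_period: "g pi = g 0" by (auto dest: has_integral_unique)
  have "\<forall>x. ((\<lambda>v. g (v + pi) - g v) has_real_derivative 0) (at x)"
  proof
    fix x
    have "((\<lambda>v. g (v + pi) - g v) has_real_derivative h (x + pi) * 1 - h x) (at x)"
      by (intro DERIV_diff DERIV_chain2[OF g] g) (auto intro!: derivative_eq_intros)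
    then show "((\<lambda>v. g (v + pi) - g v) has_real_derivative 0) (at x)"
      by (simp add: h_def per)
  qed
  from DERIV_isconst_all[OF this] have "g (u + pi) - g u = g (0 + pi) - g 0" for u .
  then have "g (u + pi) = g u" for u using g_period by simp
  moreover have "(g has_real_derivative (f u - m) / \<mu>) (at u)" for u
    using g by (simp add: h_def)
  ultimately show ?thesis using that by blast
qed

lemma C1_periodic_corrector:
  fixes f :: "real \<Rightarrow> real" and \<mu> :: real
  assumes f_C1: "f C1_differentiable_on UNIV" and f_per: "\<And>u. f (u + pi) = f u"
  defines "m \<equiv> integral {0..pi} (\<lambda>\<theta>. f \<theta> / pi)"
  obtains g L D Cg where "\<And>u. (g has_real_derivative (f u - m) / \<mu>) (at u)" "\<And>u. g (u + pi) = g u"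
    "\<And>a b. \<bar>(f a - m) / \<mu> - (f b - m) / \<mu>\<bar> \<le> L * \<bar>a - b\<bar>"
    "\<And>u. \<bar>(f u - m) / \<mu>\<bar> \<le> D" "\<And>u. \<bar>g u\<bar> \<le> Cg"
proof -
  have f_cont: "continuous_on UNIV f"
    using f_C1 by (rule C1_differentiable_imp_continuous_on)
  obtain g where g': "\<And>u. (g has_real_derivative (f u - m) / \<mu>) (at u)" and g_per: "\<And>u. g (u + pi) = g u"
    using periodic_corrector[OF f_cont f_per] unfolding m_def by blast
  obtain L where L: "\<And>a b. \<bar>f a - f b\<bar> \<le> L * \<bar>a - b\<bar>"
    using C1_periodic_lipschitz[OF f_C1 f_per] by blast
  have "\<bar>(f a - m) / \<mu> - (f b - m) / \<mu>\<bar> \<le> (L / \<bar>\<mu>\<bar>) * \<bar>a - b\<bar>" for a b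
    using divide_right_mono[OF L[of a b] abs_ge_zero[of \<mu>]] by (simp add: diff_divide_distrib[symmetric])
  moreover have "continuous_on UNIV (\<lambda>u. (f u - m) / \<mu>)"
    unfolding divide_inverse by (intro continuous_on_mult_right continuous_on_diff f_cont continuous_on_const)
  then obtain D where "\<And>u. \<bar>(f u - m) / \<mu>\<bar> \<le> D"
    using periodic_continuous_bounded[of "\<lambda>u. (f u - m) / \<mu>"] f_per by auto
  moreover obtain Cg where "\<And>u. \<bar>g u\<bar> \<le> Cg"
    using periodic_continuous_bounded[of g] g_per g'
    by (metis DERIV_isCont continuous_at_imp_continuous_on)
  ultimately show ?thesis using g' g_per that by blast
qed

lemma taylor_lipschitz_derivative:
  fixes g g' :: "real \<Rightarrow> real"
  assumes g': "\<And>u. (g has_real_derivative g' u) (at u)"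
    and lip: "\<And>a b. \<bar>g' a - g' b\<bar> \<le> L * \<bar>a - b\<bar>"
  shows "\<bar>g (t + \<delta>) - g t - g' t * \<delta>\<bar> \<le> L * \<delta>\<^sup>2"
proof -
  have "norm ((g (t + \<delta>) - g' t * (t + \<delta>)) - (g t - g' t * t)) \<le> (L * \<bar>\<delta>\<bar>) * norm ((t + \<delta>) - t)"
  proof (rule field_differentiable_bound[OF convex_closed_segment,
        where f = "\<lambda>u. g u - g' t * u" and f' = "\<lambda>u. g' u - g' t"])
    fix z assume z: "z \<in> closed_segment t (t + \<delta>)"
    have "(g has_field_derivative g' z) (at z within closed_segment t (t + \<delta>))"
      using g'[of z] by (rule has_field_derivative_at_within)
    then show "((\<lambda>u. g u - g' t * u) has_field_derivative g' z - g' t) (at z within closed_segment t (t + \<delta>))"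
      by (auto intro!: derivative_eq_intros)
    have "\<bar>z - t\<bar> \<le> \<bar>\<delta>\<bar>"
      using z by (auto simp: closed_segment_eq_real_ivl split: if_splits)
    moreover have "L \<ge> 0" using lip[of 1 0] by simp
    ultimately have "L * \<bar>z - t\<bar> \<le> L * \<bar>\<delta>\<bar>" by (rule mult_left_mono)
    then show "norm (g' z - g' t) \<le> L * \<bar>\<delta>\<bar>"
      using lip[of z t] by simp
  qed auto
  moreover have "(L * \<bar>\<delta>\<bar>) * norm ((t + \<delta>) - t) = L * \<delta>\<^sup>2"
    by (simp add: power2_eq_square abs_mult_self_eq mult.assoc)
  moreover have "(g (t + \<delta>) - g' t * (t + \<delta>)) - (g t - g' t * t) = g (t + \<delta>) - g t - g' t * \<delta>"
    by (simp add: algebra_simps)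
  ultimately show ?thesis by (simp only: real_norm_def)
qed

(* Periodicity of g absorbs the multiple of pi by which Smap is ambiguous. *)
lemma periodic_Smap_sign_mexp:
  fixes g g' :: "real \<Rightarrow> real"
  assumes g': "\<And>u. (g has_real_derivative g' u) (at u)"
    and lip: "\<And>a b. \<bar>g' a - g' b\<bar> \<le> L * \<bar>a - b\<bar>"
    and per: "\<And>u. g (u + pi) = g u" and bound: "\<And>u. \<bar>g' u\<bar> \<le> D"
    and s: "s \<in> {1, -1}" and small: "norm1 X \<le> 1/50"
  shows "\<bar>g (Smap (s *\<^sub>R mexp X) t) - g t - g' t * ang_part X t\<bar> \<le> (4 * L + 40 * D) * (norm1 X)\<^sup>2"
proof -
  obtain j :: int and \<delta> where j: "Smap (s *\<^sub>R mexp X) t = t + \<delta> + j * pi"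
    and close: "\<bar>\<delta> - ang_part X t\<bar> \<le> 40 * (norm1 X)\<^sup>2" and \<delta>_le: "\<bar>\<delta>\<bar> \<le> 2 * norm1 X"
    using Smap_sign_mexp[OF s small] by blast
  have "L \<ge> 0" using lip[of 1 0] by simp
  have "g (Smap (s *\<^sub>R mexp X) t) = g (t + \<delta>)"
    unfolding j using periodic_shift_int[where g = g, OF per] by simp
  moreover have "\<bar>g (t + \<delta>) - g t - g' t * \<delta>\<bar> \<le> 4 * L * (norm1 X)\<^sup>2"
  proof -
    have "\<delta>\<^sup>2 \<le> (2 * norm1 X)\<^sup>2"
      using \<delta>_le by (metis abs_le_square_iff abs_mult abs_numeral abs_of_nonneg norm1_nonneg)
    then have "L * \<delta>\<^sup>2 \<le> L * (4 * (norm1 X)\<^sup>2)"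
      using \<open>L \<ge> 0\<close> by (intro mult_left_mono) (auto simp: power_mult_distrib)
    then show ?thesis using taylor_lipschitz_derivative[OF g' lip, of t \<delta>] by simp
  qed
  moreover have "\<bar>g' t * \<delta> - g' t * ang_part X t\<bar> \<le> D * (40 * (norm1 X)\<^sup>2)"
    unfolding right_diff_distrib[symmetric] abs_mult using bound[of t] close by (intro mult_mono) auto
  ultimately show ?thesis by (simp add: algebra_simps)
qed

section \<open>The Markov chain of directions\<close>

lemma borel_measurable_Arg [measurable]: "Arg \<in> borel_measurable borel"
proof -
  have Arg_eq: "Arg = (\<lambda>z. if z \<in> - \<real>\<^sub>\<le>\<^sub>0 then Arg z else if z = 0 then 0 else pi)"
  proof
    fix z :: complex
    show "Arg z = (if z \<in> - \<real>\<^sub>\<le>\<^sub>0 then Arg z else if z = 0 then 0 else pi)"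
    proof (cases "z = 0")
      case False
      then show ?thesis
        by (auto simp: Arg_eq_pi_iff nonpos_Reals_def complex_is_Real_iff complex_eq_iff)
    qed (simp add: Arg_zero)
  qed
  have "open (- \<real>\<^sub>\<le>\<^sub>0 :: complex set)"
    by (simp add: open_Compl)
  then have "{z. z \<notin> \<real>\<^sub>\<le>\<^sub>0} \<in> sets (borel :: complex measure)"
    using borel_open by (simp add: Compl_eq)
  moreover have "Arg \<in> borel_measurable (restrict_space borel {z. z \<in> - \<real>\<^sub>\<le>\<^sub>0})"
    by (rule borel_measurable_continuous_on_restrict) (rule continuous_on_subset[OF continuous_on_Arg], auto)
  moreover have "(\<lambda>z::complex. if z = 0 then 0 else pi) \<in> borel_measurable (restrict_space borel {z. z \<notin> - \<real>\<^sub>\<le>\<^sub>0})"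
    by (rule measurable_restrict_space1) measurable
  ultimately show ?thesis
    by (subst Arg_eq, subst measurable_If_restrict_space_iff) auto
qed

lemma measurable_Smap_conj:
  fixes T :: "'s \<Rightarrow> mat2"
  assumes T_meas: "T \<in> borel_measurable p"
  shows "(\<lambda>(\<sigma>, x). Smap (A ** T \<sigma> ** C) x) \<in> borel_measurable (p \<Otimes>\<^sub>M borel)"
proof -
  have entry_cont: "continuous_on UNIV (\<lambda>X::mat2. X $ i $ j)" for i j
    by (intro linear_continuous_on bounded_linear_compose[OF bounded_linear_vec_nth bounded_linear_vec_nth])
  have [measurable]: "(\<lambda>\<sigma>. T \<sigma> $ i $ j) \<in> borel_measurable p" for i j
    using borel_measurable_continuous_on[OF entry_cont T_meas] .
  have [measurable]: "(\<lambda>\<sigma>. (A ** T \<sigma> ** C) $ i $ j) \<in> borel_measurable p" for i j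
    by (simp add: matrix_matrix_mult_def sum_2) measurable
  have Complex_eq: "(\<lambda>(a, b). Complex a b) = (\<lambda>z. complex_of_real (fst z) + \<i> * complex_of_real (snd z))"
    by (auto simp: fun_eq_iff complex_eq_iff)
  have [measurable]: "(\<lambda>(a, b). Complex a b) \<in> borel_measurable (borel \<Otimes>\<^sub>M borel)"
    unfolding Complex_eq by measurable
  show ?thesis
    unfolding Smap_def by (simp add: matrix_vector_mult_def sum_2 evec_def) measurable
qed

lemma telescoping_mean_bound:
  fixes \<phi> \<gamma> \<epsilon> :: "nat \<Rightarrow> real"
  assumes step: "\<And>n. \<gamma> (Suc n) - \<gamma> n = a * (\<phi> n - m) + \<epsilon> n"
    and \<gamma>_bound: "\<And>n. \<bar>\<gamma> n\<bar> \<le> c" and \<epsilon>_bound: "\<And>n. \<bar>\<epsilon> n\<bar> \<le> e"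
    and a: "0 < a" and N: "1 \<le> N"
  shows "\<bar>(\<Sum>n<N. \<phi> n) / N - m\<bar> \<le> 2 * c / (a * N) + e / a"
proof -
  have "a * (\<Sum>n<N. \<phi> n - m) = (\<Sum>n<N. (\<gamma> (Suc n) - \<gamma> n) - \<epsilon> n)"
    by (simp add: step sum_distrib_left)
  also have "\<dots> = \<gamma> N - \<gamma> 0 - (\<Sum>n<N. \<epsilon> n)"
    by (subst sum_subtractf, subst sum_lessThan_telescope) (rule refl)
  finally have sum_eq: "a * (\<Sum>n<N. \<phi> n - m) = \<gamma> N - \<gamma> 0 - (\<Sum>n<N. \<epsilon> n)" .
  have "a * \<bar>\<Sum>n<N. \<phi> n - m\<bar> = \<bar>\<gamma> N - \<gamma> 0 - (\<Sum>n<N. \<epsilon> n)\<bar>"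
    using a by (simp add: abs_mult flip: sum_eq)
  also have "\<dots> \<le> 2 * c + N * e"
  proof -
    have "\<bar>\<Sum>n<N. \<epsilon> n\<bar> \<le> (\<Sum>n<N. e)"
      using \<epsilon>_bound by (intro order.trans[OF sum_abs] sum_mono)
    then show ?thesis using \<gamma>_bound[of N] \<gamma>_bound[of 0] by simp
  qed
  finally have "a * \<bar>\<Sum>n<N. \<phi> n - m\<bar> \<le> 2 * c + N * e" .
  moreover have "\<bar>(\<Sum>n<N. \<phi> n) / N - m\<bar> * (a * N) = a * \<bar>\<Sum>n<N. \<phi> n - m\<bar>"
  proof -
    have "(\<Sum>n<N. \<phi> n) / N - m = (\<Sum>n<N. \<phi> n - m) / N"
      using N by (simp add: sum_subtractf field_simps)
    then show ?thesis using N by (simp add: abs_divide)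
  qed
  ultimately have "\<bar>(\<Sum>n<N. \<phi> n) / N - m\<bar> * (a * N) \<le> 2 * c + N * e" by linarith
  then have "\<bar>(\<Sum>n<N. \<phi> n) / N - m\<bar> \<le> (2 * c + N * e) / (a * N)"
    using a N by (simp add: pos_le_divide_eq)
  also have "\<dots> = 2 * c / (a * N) + e / a"
    using a N by (simp add: field_simps)
  finally show ?thesis .
qed

primrec orbit :: "('s \<Rightarrow> real \<Rightarrow> real) \<Rightarrow> real \<Rightarrow> (nat \<Rightarrow> 's) \<Rightarrow> nat \<Rightarrow> real" where
  "orbit S x \<nu> 0 = x"
| "orbit S x \<nu> (Suc n) = S (\<nu> n) (orbit S x \<nu> n)"

(* theta_seq ignores the coordinate 0 of its random sequence. *)
lemma theta_seq_eq_orbit: "theta_seq S x \<omega> n = orbit S x (\<lambda>i. \<omega> (Suc i)) n"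
  by (induction n) auto

lemma orbit_Suc_first_step: "orbit S x \<nu> (Suc n) = orbit S (S (\<nu> 0) x) (\<lambda>i. \<nu> (Suc i)) n"
  by (induction n) auto

definition markov_op :: "'s measure \<Rightarrow> ('s \<Rightarrow> real \<Rightarrow> real) \<Rightarrow> (real \<Rightarrow> real) \<Rightarrow> real \<Rightarrow> real" where
  "markov_op p S h x = (\<integral>\<sigma>. h (S \<sigma> x) \<partial>p)"

context prob_space
begin

lemma abs_integral_le_const:
  fixes F :: "'a \<Rightarrow> real"
  assumes "F \<in> borel_measurable M" "\<And>x. x \<in> space M \<Longrightarrow> \<bar>F x\<bar> \<le> c"
  shows "\<bar>integral\<^sup>L M F\<bar> \<le> c"
proof -
  have "integrable M F"
    using assms by (intro integrable_const_bound[where B = c]) auto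
  have "\<bar>integral\<^sup>L M F\<bar> \<le> integral\<^sup>L M (\<lambda>x. \<bar>F x\<bar>)"
    by (rule integral_abs_bound)
  also have "\<dots> \<le> integral\<^sup>L M (\<lambda>_. c)"
    using assms \<open>integrable M F\<close> by (intro integral_mono) auto
  finally show ?thesis by (simp add: prob_space)
qed

lemma measurable_shift: "(\<lambda>\<omega> i. \<omega> (Suc i)) \<in> measurable (PiM UNIV (\<lambda>_. M)) (PiM UNIV (\<lambda>_. M))"
  by (rule measurable_PiM_single'[where f = "\<lambda>i \<omega>. \<omega> (Suc i)"]) (auto simp: space_PiM)

context
  fixes S :: "'a \<Rightarrow> real \<Rightarrow> real"
  assumes S_meas: "(\<lambda>(\<sigma>, x). S \<sigma> x) \<in> borel_measurable (M \<Otimes>\<^sub>M borel)"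
begin

interpretation seq: sequence_space M ..
interpretation pair: pair_prob_space M seq.S ..

lemma measurable_S_at: "(\<lambda>\<sigma>. S \<sigma> x) \<in> borel_measurable M"
  using measurable_comp[OF measurable_Pair2'[of x borel M] S_meas] by (simp add: comp_def)

lemma measurable_orbit:
  "(\<lambda>(x, \<nu>). orbit S x \<nu> n) \<in> borel_measurable (borel \<Otimes>\<^sub>M PiM UNIV (\<lambda>_. M))"
proof (induction n)
  case (Suc n)
  have "(\<lambda>(x, \<nu>). (\<nu> n, orbit S x \<nu> n)) \<in> measurable (borel \<Otimes>\<^sub>M PiM UNIV (\<lambda>_. M)) (M \<Otimes>\<^sub>M borel)"
    using Suc by measurable
  from measurable_comp[OF this S_meas] show ?case
    by (simp add: comp_def case_prod_beta')
qed simp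

lemma measurable_orbit_at: "(\<lambda>\<nu>. orbit S x \<nu> n) \<in> borel_measurable (PiM UNIV (\<lambda>_. M))"
proof -
  have "(\<lambda>\<nu>. (x, \<nu>)) \<in> measurable (PiM UNIV (\<lambda>_. M)) (borel \<Otimes>\<^sub>M PiM UNIV (\<lambda>_. M))"
    by simp
  from measurable_comp[OF this measurable_orbit] show ?thesis by (simp add: comp_def)
qed

lemma measurable_theta_seq: "(\<lambda>\<omega>. theta_seq S x \<omega> n) \<in> borel_measurable (PiM UNIV (\<lambda>_. M))"
  using measurable_comp[OF measurable_shift measurable_orbit_at] by (simp add: comp_def theta_seq_eq_orbit)

lemma markov_op_measurable:
  "h \<in> borel_measurable borel \<Longrightarrow> markov_op M S h \<in> borel_measurable borel"
  unfolding markov_op_def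
  using S_meas measurable_pair_swap_iff[of "\<lambda>(\<sigma>, x). S \<sigma> x" M borel borel]
  by (intro borel_measurable_lebesgue_integral) (simp add: case_prod_beta')
context
  fixes h :: "real \<Rightarrow> real" and c :: real
  assumes h_meas: "h \<in> borel_measurable borel" and h_bound: "\<And>y. \<bar>h y\<bar> \<le> c"
begin

lemma integrable_S_at: "integrable M (\<lambda>\<sigma>. h (S \<sigma> x))"
  using measurable_S_at h_meas h_bound by (intro integrable_const_bound[where B = c]) auto

lemma markov_op_bounded: "\<bar>markov_op M S h x\<bar> \<le> c"
  unfolding markov_op_def using measurable_S_at h_meas h_bound by (intro abs_integral_le_const) auto

lemma integrable_theta_seq: "integrable (PiM UNIV (\<lambda>_. M)) (\<lambda>\<omega>. h (theta_seq S x \<omega> n))"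
  using measurable_theta_seq h_meas h_bound by (intro seq.integrable_const_bound[where B = c]) auto

lemma abs_integral_theta_seq_le: "\<bar>\<integral>\<omega>. h (theta_seq S x \<omega> n) \<partial>PiM UNIV (\<lambda>_. M)\<bar> \<le> c"
  using measurable_theta_seq h_meas h_bound by (intro seq.abs_integral_le_const) auto

end

lemma integral_orbit_eq_markov_op_power:
  assumes h_meas: "h \<in> borel_measurable borel" and h_bound: "\<And>y. \<bar>h y\<bar> \<le> c"
  shows "(\<integral>\<nu>. h (orbit S x \<nu> n) \<partial>PiM UNIV (\<lambda>_. M)) = (markov_op M S ^^ n) h x"
proof (induction n arbitrary: x)
  case 0
  then show ?case by (simp add: seq.P.prob_space)
next
  case (Suc n)
  \<comment> \<open>Condition on the first step: split off the coordinate \<open>0\<close> of the sequence.\<close>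
  let ?G = "\<lambda>(\<sigma>, \<nu>). h (orbit S (S \<sigma> x) \<nu> n)"
  have G_meas: "?G \<in> borel_measurable (M \<Otimes>\<^sub>M seq.S)"
  proof -
    have "(\<lambda>(\<sigma>, \<nu>). (S \<sigma> x, \<nu>)) \<in> measurable (M \<Otimes>\<^sub>M seq.S) (borel \<Otimes>\<^sub>M seq.S)"
      using measurable_S_at by measurable
    from measurable_comp[OF this measurable_orbit] show ?thesis
      using h_meas by (simp add: comp_def case_prod_beta')
  qed
  have "integrable (M \<Otimes>\<^sub>M seq.S) ?G"
    using G_meas h_bound by (intro pair.P.integrable_const_bound[where B = c]) (auto simp: case_prod_beta')
  from pair.integral_fst'[OF this]
  have "(\<integral>z. ?G z \<partial>(M \<Otimes>\<^sub>M seq.S)) = (\<integral>\<sigma>. (\<integral>\<nu>. h (orbit S (S \<sigma> x) \<nu> n) \<partial>seq.S) \<partial>M)"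
    by simp
  moreover have "(\<integral>\<nu>. h (orbit S x \<nu> (Suc n)) \<partial>seq.S) = (\<integral>z. ?G z \<partial>(M \<Otimes>\<^sub>M seq.S))"
  proof -
    have meas: "(\<lambda>\<nu>. h (orbit S x \<nu> (Suc n))) \<in> borel_measurable seq.S"
      using measurable_orbit_at h_meas by measurable
    have "(\<integral>\<nu>. h (orbit S x \<nu> (Suc n)) \<partial>seq.S)
        = (\<integral>\<nu>. h (orbit S x \<nu> (Suc n)) \<partial>distr (M \<Otimes>\<^sub>M seq.S) seq.S (\<lambda>(\<sigma>, \<nu>). case_nat \<sigma> \<nu>))"
      by (simp add: seq.PiM_iter)
    also have "\<dots> = (\<integral>z. h (orbit S x ((\<lambda>(\<sigma>, \<nu>). case_nat \<sigma> \<nu>) z) (Suc n)) \<partial>(M \<Otimes>\<^sub>M seq.S))"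
      by (rule integral_distr) (use meas in simp_all)
    also have "\<dots> = (\<integral>z. ?G z \<partial>(M \<Otimes>\<^sub>M seq.S))"
      by (intro Bochner_Integration.integral_cong refl)
        (auto simp del: orbit.simps(2) simp add: orbit_Suc_first_step)
    finally show ?thesis .
  qed
  ultimately show ?case
    using Suc by (simp add: markov_op_def)
qed

lemma integral_shift_PiM:
  fixes F :: "(nat \<Rightarrow> 'a) \<Rightarrow> real"
  assumes F_meas: "F \<in> borel_measurable seq.S" and F_bound: "\<And>\<omega>. \<bar>F \<omega>\<bar> \<le> c"
  shows "(\<integral>\<omega>. F (\<lambda>i. \<omega> (Suc i)) \<partial>seq.S) = (\<integral>\<omega>. F \<omega> \<partial>seq.S)"
proof -
  have G_meas: "(\<lambda>(\<sigma>, \<nu>). F \<nu>) \<in> borel_measurable (M \<Otimes>\<^sub>M seq.S)"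
    using F_meas by measurable
  have meas: "(\<lambda>\<omega>. F (\<lambda>i. \<omega> (Suc i))) \<in> borel_measurable seq.S"
    using measurable_comp[OF measurable_shift F_meas] by (simp add: comp_def)
  have "(\<integral>\<omega>. F (\<lambda>i. \<omega> (Suc i)) \<partial>seq.S)
      = (\<integral>\<omega>. F (\<lambda>i. \<omega> (Suc i)) \<partial>distr (M \<Otimes>\<^sub>M seq.S) seq.S (\<lambda>(\<sigma>, \<nu>). case_nat \<sigma> \<nu>))"
    by (simp add: seq.PiM_iter)
  also have "\<dots> = (\<integral>z. F (\<lambda>i. ((\<lambda>(\<sigma>, \<nu>). case_nat \<sigma> \<nu>) z) (Suc i)) \<partial>(M \<Otimes>\<^sub>M seq.S))"
    by (rule integral_distr) (use meas in simp_all)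
  also have "\<dots> = (\<integral>z. (\<lambda>(\<sigma>, \<nu>). F \<nu>) z \<partial>(M \<Otimes>\<^sub>M seq.S))"
    by (intro Bochner_Integration.integral_cong refl) auto
  also have "\<dots> = (\<integral>\<sigma>. (\<integral>\<nu>. F \<nu> \<partial>seq.S) \<partial>M)"
  proof -
    have "integrable (M \<Otimes>\<^sub>M seq.S) (\<lambda>(\<sigma>, \<nu>). F \<nu>)"
      using G_meas F_bound by (intro pair.P.integrable_const_bound[where B = c]) (auto simp: case_prod_beta')
    from pair.integral_fst'[OF this] show ?thesis by simp
  qed
  finally show ?thesis by (simp add: prob_space)
qed

lemma integral_theta_seq_eq_markov_op_power:
  assumes h_meas: "h \<in> borel_measurable borel" and h_bound: "\<And>y. \<bar>h y\<bar> \<le> c"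
  shows "(\<integral>\<omega>. h (theta_seq S x \<omega> n) \<partial>PiM UNIV (\<lambda>_. M)) = (markov_op M S ^^ n) h x"
  unfolding theta_seq_eq_orbit
  using integral_shift_PiM[of "\<lambda>\<nu>. h (orbit S x \<nu> n)" c] measurable_orbit_at h_meas h_bound
    integral_orbit_eq_markov_op_power[OF h_meas h_bound]
  by simp

lemma integral_theta_seq_Suc:
  assumes "h \<in> borel_measurable borel" "\<And>y. \<bar>h y\<bar> \<le> c"
  shows "(\<integral>\<omega>. h (theta_seq S x \<omega> (Suc n)) \<partial>PiM UNIV (\<lambda>_. M))
    = (\<integral>\<omega>. markov_op M S h (theta_seq S x \<omega> n) \<partial>PiM UNIV (\<lambda>_. M))"
  using integral_theta_seq_eq_markov_op_power[OF assms]
    integral_theta_seq_eq_markov_op_power[OF markov_op_measurable[OF assms(1)] markov_op_bounded[OF assms]]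
  by (simp add: funpow_Suc_right del: funpow.simps theta_seq.simps(2))

lemma I_N_poisson_bound:
  fixes f g :: "real \<Rightarrow> real"
  assumes f_meas: "f \<in> borel_measurable borel" and f_bound: "\<And>y. \<bar>f y\<bar> \<le> cf"
    and g_meas: "g \<in> borel_measurable borel" and g_bound: "\<And>y. \<bar>g y\<bar> \<le> cg"
    and a: "0 < a" and poisson: "\<And>y. \<bar>markov_op M S g y - g y - a * (f y - m)\<bar> \<le> e"
    and N: "1 \<le> N"
  shows "\<bar>I_N M S x f N - m\<bar> \<le> 2 * cg / (a * N) + e / a"
proof -
  define \<Phi> :: "(real \<Rightarrow> real) \<Rightarrow> nat \<Rightarrow> real" where
    "\<Phi> h n = (\<integral>\<omega>. h (theta_seq S x \<omega> n) \<partial>PiM UNIV (\<lambda>_. M))" for h n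
  define E where "E y = markov_op M S g y - g y - a * (f y - m)" for y
  have E_meas: "E \<in> borel_measurable borel"
    unfolding E_def using markov_op_measurable[OF g_meas] f_meas g_meas by measurable
  have E_bound: "\<bar>E y\<bar> \<le> e" for y
    using poisson by (simp add: E_def)
  have "\<Phi> g (Suc n) - \<Phi> g n = a * (\<Phi> f n - m) + \<Phi> E n" for n
  proof -
    have "\<Phi> g (Suc n) = \<Phi> (markov_op M S g) n"
      unfolding \<Phi>_def by (rule integral_theta_seq_Suc[OF g_meas g_bound])
    also have "markov_op M S g = (\<lambda>y. g y + a * f y - a * m + E y)"
      by (simp add: E_def fun_eq_iff algebra_simps)
    also have "\<Phi> \<dots> n = \<Phi> g n + a * \<Phi> f n - a * m + \<Phi> E n"
      using integrable_theta_seq[OF g_meas g_bound] integrable_theta_seq[OF f_meas f_bound]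
        integrable_theta_seq[OF E_meas E_bound]
      by (simp add: \<Phi>_def seq.P.prob_space)
    finally show ?thesis by (simp add: algebra_simps)
  qed
  moreover have "\<bar>\<Phi> g n\<bar> \<le> cg" for n
    unfolding \<Phi>_def by (rule abs_integral_theta_seq_le[OF g_meas g_bound])
  moreover have "\<bar>\<Phi> E n\<bar> \<le> e" for n
    unfolding \<Phi>_def by (rule abs_integral_theta_seq_le[OF E_meas E_bound])
  ultimately have "\<bar>(\<Sum>n<N. \<Phi> f n) / N - m\<bar> \<le> 2 * cg / (a * N) + e / a"
    using a N by (rule telescoping_mean_bound)
  then show ?thesis by (simp add: I_N_def \<Phi>_def)
qed

end

end

section \<open>The anomaly\<close>

locale first_order_anomaly = prob_space p
  for p :: "'s measure" and \<eta> :: "nat \<Rightarrow> real" and P :: "nat \<Rightarrow> 's \<Rightarrow> mat2"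
    and K Kc :: nat and \<mu> lam0 B :: real +
  assumes P_meas: "\<And>k. P k \<in> borel_measurable p"
    and eta_pos: "0 < \<eta> 1"
    and eta_mono: "\<And>k. 1 \<le> k \<Longrightarrow> \<eta> k < \<eta> (Suc k)"
    and P_sl2: "\<And>k \<sigma>. trace (P k \<sigma>) = 0"
    and lam0_pos: "0 < lam0"
    and P_summable: "\<And>\<sigma>. \<sigma> \<in> space p \<Longrightarrow> summable (\<lambda>k. lam0 powr \<eta> (Suc k) * norm (P (Suc k) \<sigma>))"
    and P_sum_le: "\<And>\<sigma>. \<sigma> \<in> space p \<Longrightarrow> (\<Sum>k. lam0 powr \<eta> (Suc k) * norm (P (Suc k) \<sigma>)) \<le> B"
    and K_twice: "\<eta> K = 2 * \<eta> 1"
    and Kc_range: "1 \<le> Kc" "Kc < K"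
    and E_zero: "\<And>k. 1 \<le> k \<Longrightarrow> k < Kc \<Longrightarrow> expectation (P k) = 0"
    and mu_const: "\<And>\<theta>. expectation (\<lambda>\<sigma>. pfun (P Kc \<sigma>) \<theta>) = \<mu>"
begin

(* The exponent in the expansion M T_lam M^-1 = +-exp(...). *)
definition generator :: "real \<Rightarrow> 's \<Rightarrow> mat2" where
  "generator lam \<sigma> = (\<Sum>k. lam powr \<eta> (Suc k) *\<^sub>R P (Suc k) \<sigma>)"

definition Kp :: nat where
  "Kp = (LEAST k. Kc < k \<and> (expectation (P k) \<noteq> 0 \<or> k = K))"

lemma eta_le:
  assumes "1 \<le> i" "i \<le> j"
  shows "\<eta> i \<le> \<eta> j"
  using assms(2)
proof (induction rule: dec_induct)
  case (step n)
  then show ?case using eta_mono[of n] assms(1) by simp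
qed simp

lemma B_nonneg: "0 \<le> B"
proof -
  obtain \<sigma> where \<sigma>: "\<sigma> \<in> space p" using not_empty by blast
  have "0 \<le> (\<Sum>k. lam0 powr \<eta> (Suc k) * norm (P (Suc k) \<sigma>))"
    by (rule suminf_nonneg[OF P_summable[OF \<sigma>]]) simp
  then show ?thesis using P_sum_le[OF \<sigma>] by linarith
qed

lemma Kp_gt: "Kc < Kp" and Kp_le: "Kp \<le> K"
  and expectation_P_eq_zero: "1 \<le> k \<Longrightarrow> k < Kp \<Longrightarrow> k \<noteq> Kc \<Longrightarrow> expectation (P k) = 0"
proof -
  have "Kc < Kp \<and> (expectation (P Kp) \<noteq> 0 \<or> Kp = K)"
    unfolding Kp_def by (rule LeastI[of _ K]) (use Kc_range in simp)
  then show "Kc < Kp" by simp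
  show Kp_le: "Kp \<le> K"
    unfolding Kp_def by (rule Least_le) (use Kc_range in simp)
  assume k: "1 \<le> k" "k < Kp" "k \<noteq> Kc"
  show "expectation (P k) = 0"
  proof (cases "k < Kc")
    case False
    then have "\<not> (Kc < k \<and> (expectation (P k) \<noteq> 0 \<or> k = K))"
      using not_less_Least[OF k(2)[unfolded Kp_def]] by simp
    then show ?thesis using k False Kp_le by auto
  qed (use k E_zero in auto)
qed

lemma norm_P_le: "1 \<le> k \<Longrightarrow> \<sigma> \<in> space p \<Longrightarrow> norm (P k \<sigma>) \<le> B / lam0 powr \<eta> k"
proof -
  assume "1 \<le> k" "\<sigma> \<in> space p"
  then obtain j where k: "k = Suc j" by (cases k) auto
  have "lam0 powr \<eta> (Suc j) * norm (P (Suc j) \<sigma>) \<le> (\<Sum>k. lam0 powr \<eta> (Suc k) * norm (P (Suc k) \<sigma>))"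
    using sum_le_suminf[OF P_summable[OF \<open>\<sigma> \<in> space p\<close>], of "{j}"] by simp
  also have "\<dots> \<le> B" using P_sum_le[OF \<open>\<sigma> \<in> space p\<close>] .
  finally show ?thesis using lam0_pos unfolding k by (simp add: field_simps)
qed

lemma integrable_P: "1 \<le> k \<Longrightarrow> integrable p (P k)"
  using norm_P_le P_meas by (intro integrable_const_bound[where B = "B / lam0 powr \<eta> k"]) auto

lemma norm_expectation_P_le:
  assumes "1 \<le> k"
  shows "norm (expectation (P k)) \<le> B / lam0 powr \<eta> k"
proof -
  have "norm (expectation (P k)) \<le> expectation (\<lambda>\<sigma>. norm (P k \<sigma>))"
    by (rule integral_norm_bound)
  also have "\<dots> \<le> expectation (\<lambda>\<sigma>. B / lam0 powr \<eta> k)"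
    using assms by (intro integral_mono integrable_norm integrable_P norm_P_le) auto
  finally show ?thesis by (simp add: prob_space)
qed

lemma generator_bounds:
  assumes "0 < lam" "lam \<le> lam0" "\<sigma> \<in> space p"
  shows "norm1 (generator lam \<sigma>) \<le> 4 * (lam / lam0) powr \<eta> 1 * B"
    and "\<bar>ang_part (generator lam \<sigma>) x - (\<Sum>k<K-1. lam powr \<eta> (Suc k) * ang_part (P (Suc k) \<sigma>) x)\<bar>
           \<le> 4 * (lam / lam0) powr \<eta> K * B"
proof -
  have min: "\<eta> (Suc 0) \<le> \<eta> (Suc k)" and tail: "K - 1 \<le> k \<Longrightarrow> \<eta> K \<le> \<eta> (Suc k)" for k
    using Kc_range by (auto intro: eta_le)
  note series = powr_series_bounds[OF lam0_pos assms(1,2) P_summable[OF assms(3)] P_sum_le[OF assms(3)] min tail]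
  show "norm1 (generator lam \<sigma>) \<le> 4 * (lam / lam0) powr \<eta> 1 * B"
    using series(1) unfolding generator_def by simp
  show "\<bar>ang_part (generator lam \<sigma>) x - (\<Sum>k<K-1. lam powr \<eta> (Suc k) * ang_part (P (Suc k) \<sigma>) x)\<bar>
      \<le> 4 * (lam / lam0) powr \<eta> K * B"
    using series(2) unfolding generator_def .
qed

lemma ang_part_expectation_P:
  "1 \<le> k \<Longrightarrow> ang_part (expectation (P k)) x = expectation (\<lambda>\<sigma>. ang_part (P k \<sigma>) x)"
  using integral_bounded_linear[OF bounded_linear_ang_part integrable_P] by simp

lemma abs_ang_part_expectation_P_le:
  assumes "1 \<le> k" "0 < lam"
  shows "\<bar>lam powr \<eta> k * ang_part (expectation (P k)) x\<bar> \<le> 4 * B * (lam / lam0) powr \<eta> k"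
proof -
  have "\<bar>ang_part (expectation (P k)) x\<bar> \<le> 4 * (B / lam0 powr \<eta> k)"
    using ang_part_bound[of "expectation (P k)" x] norm1_le_norm[of "expectation (P k)"]
      norm_expectation_P_le[OF assms(1)] by simp
  then have "\<bar>lam powr \<eta> k * ang_part (expectation (P k)) x\<bar> \<le> lam powr \<eta> k * (4 * (B / lam0 powr \<eta> k))"
    unfolding abs_mult by (intro mult_mono) auto
  also have "\<dots> = 4 * B * (lam / lam0) powr \<eta> k"
    using assms(2) lam0_pos by (simp add: powr_divide)
  finally show ?thesis .
qed

lemma expectation_truncated_ang_part:
  assumes lam: "0 < lam" "lam \<le> lam0"
  shows "\<bar>expectation (\<lambda>\<sigma>. \<Sum>k<K-1. lam powr \<eta> (Suc k) * ang_part (P (Suc k) \<sigma>) x)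
           - lam powr \<eta> Kc * \<mu>\<bar> \<le> 4 * B * K * (lam / lam0) powr \<eta> Kp"
proof -
  define h where "h k = lam powr \<eta> (Suc k) * ang_part (expectation (P (Suc k))) x" for k
  have "expectation (\<lambda>\<sigma>. \<Sum>k<K-1. lam powr \<eta> (Suc k) * ang_part (P (Suc k) \<sigma>) x) = (\<Sum>k<K-1. h k)"
    using integrable_bounded_linear[OF bounded_linear_ang_part integrable_P]
    by (simp add: h_def integral_bounded_linear[OF bounded_linear_ang_part integrable_P, symmetric])
  also have "\<dots> = (\<Sum>k<Kp-1. h k) + (\<Sum>k\<in>{Kp-1..<K-1}. h k)"
    using sum.atLeastLessThan_concat[of 0 "Kp - 1" "K - 1" h] Kp_le by (simp add: atLeast0LessThan diff_le_mono)
  \<comment> \<open>Below \<open>Kp\<close> only the term of index \<open>Kc\<close> has nonzero mean.\<close>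
  also have "(\<Sum>k<Kp-1. h k) = h (Kc - 1)"
  proof -
    have "h k = 0" if "k \<in> {..<Kp-1} - {Kc - 1}" for k
    proof -
      have "expectation (P (Suc k)) = 0"
        using that Kc_range by (intro expectation_P_eq_zero) auto
      then show ?thesis by (simp add: h_def ang_part_def)
    qed
    then show ?thesis
      using sum.remove[of "{..<Kp-1}" "Kc - 1" h] Kp_gt Kc_range by simp
  qed
  also have "h (Kc - 1) = lam powr \<eta> Kc * \<mu>"
    using Kc_range by (simp add: h_def ang_part_expectation_P ang_part_eq_pfun P_sl2 mu_const)
  finally have split: "expectation (\<lambda>\<sigma>. \<Sum>k<K-1. lam powr \<eta> (Suc k) * ang_part (P (Suc k) \<sigma>) x)
      - lam powr \<eta> Kc * \<mu> = (\<Sum>k\<in>{Kp-1..<K-1}. h k)" by simp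
  have "\<bar>h k\<bar> \<le> 4 * B * (lam / lam0) powr \<eta> Kp" if "k \<in> {Kp-1..<K-1}" for k
  proof -
    have "\<bar>h k\<bar> \<le> 4 * B * (lam / lam0) powr \<eta> (Suc k)"
      unfolding h_def using lam by (intro abs_ang_part_expectation_P_le) auto
    also have "\<dots> \<le> 4 * B * (lam / lam0) powr \<eta> Kp"
      using that Kp_gt Kc_range lam B_nonneg by (intro mult_left_mono powr_mono' eta_le) auto
    finally show ?thesis .
  qed
  then have "\<bar>\<Sum>k\<in>{Kp-1..<K-1}. h k\<bar> \<le> of_nat (card {Kp-1..<K-1}) * (4 * B * (lam / lam0) powr \<eta> Kp)"
    by (intro order.trans[OF sum_abs] sum_bounded_above) auto
  also have "\<dots> \<le> of_nat K * (4 * B * (lam / lam0) powr \<eta> Kp)"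
    using B_nonneg by (intro mult_right_mono) auto
  finally show ?thesis unfolding split by (simp add: algebra_simps)
qed

lemma Smap_generator_step:
  fixes g g' :: "real \<Rightarrow> real"
  assumes g': "\<And>u. (g has_real_derivative g' u) (at u)"
    and lip: "\<And>a b. \<bar>g' a - g' b\<bar> \<le> L * \<bar>a - b\<bar>"
    and per: "\<And>u. g (u + pi) = g u" and g'_bound: "\<And>u. \<bar>g' u\<bar> \<le> D"
    and lam: "0 < lam" "lam \<le> lam0" and small: "4 * (lam / lam0) powr \<eta> 1 * B \<le> 1/50"
    and \<sigma>: "\<sigma> \<in> space p" and s: "s \<in> {1, -1}"
  shows "\<bar>g (Smap (s *\<^sub>R mexp (generator lam \<sigma>)) x) - g x
           - g' x * (\<Sum>k<K-1. lam powr \<eta> (Suc k) * ang_part (P (Suc k) \<sigma>) x)\<bar>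
         \<le> ((4 * L + 40 * D) * 16 * B\<^sup>2 + 4 * D * B) * (lam / lam0) powr \<eta> K"
proof -
  define q where "q = lam / lam0"
  have L: "0 \<le> L" using lip[of 1 0] by simp
  have D: "0 \<le> D" using g'_bound[of 0] by simp
  have q_K: "q powr \<eta> K = (q powr \<eta> 1)\<^sup>2"
    using K_twice by (simp add: power2_eq_square powr_add[symmetric])
  note gen = generator_bounds(1)[OF lam \<sigma>, folded q_def] generator_bounds(2)[OF lam \<sigma>, of x, folded q_def]
  have "\<bar>g (Smap (s *\<^sub>R mexp (generator lam \<sigma>)) x) - g x - g' x * ang_part (generator lam \<sigma>) x\<bar>
      \<le> (4 * L + 40 * D) * (norm1 (generator lam \<sigma>))\<^sup>2"
    using small gen(1) by (intro periodic_Smap_sign_mexp[OF g' lip per g'_bound s]) (simp add: q_def)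
  also have "\<dots> \<le> (4 * L + 40 * D) * (4 * q powr \<eta> 1 * B)\<^sup>2"
    using gen(1) norm1_nonneg L D by (intro mult_left_mono power_mono) auto
  finally have "\<bar>g (Smap (s *\<^sub>R mexp (generator lam \<sigma>)) x) - g x - g' x * ang_part (generator lam \<sigma>) x\<bar>
      \<le> (4 * L + 40 * D) * 16 * B\<^sup>2 * q powr \<eta> K"
    by (simp add: q_K power_mult_distrib algebra_simps)
  moreover have "\<bar>g' x * ang_part (generator lam \<sigma>) x
      - g' x * (\<Sum>k<K-1. lam powr \<eta> (Suc k) * ang_part (P (Suc k) \<sigma>) x)\<bar> \<le> D * (4 * q powr \<eta> K * B)"
    unfolding right_diff_distrib[symmetric] abs_mult using g'_bound[of x] gen(2)
    by (intro mult_mono) (auto simp: mult.commute mult.left_commute)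
  ultimately show ?thesis by (simp add: q_def algebra_simps)
qed

lemma markov_op_drift:
  fixes g g' :: "real \<Rightarrow> real" and S :: "'s \<Rightarrow> real \<Rightarrow> real"
  assumes g': "\<And>u. (g has_real_derivative g' u) (at u)"
    and lip: "\<And>a b. \<bar>g' a - g' b\<bar> \<le> L * \<bar>a - b\<bar>"
    and per: "\<And>u. g (u + pi) = g u" and g'_bound: "\<And>u. \<bar>g' u\<bar> \<le> D"
    and g_bound: "\<And>u. \<bar>g u\<bar> \<le> Cg"
    and S_meas: "(\<lambda>(\<sigma>, x). S \<sigma> x) \<in> borel_measurable (p \<Otimes>\<^sub>M borel)"
    and S_eq: "\<And>\<sigma>. \<sigma> \<in> space p \<Longrightarrow> \<exists>s\<in>{1, -1}. S \<sigma> = Smap (s *\<^sub>R mexp (generator lam \<sigma>))"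
    and lam: "0 < lam" "lam \<le> lam0" and small: "4 * (lam / lam0) powr \<eta> 1 * B \<le> 1/50"
  shows "\<bar>markov_op p S g x - g x - g' x * (lam powr \<eta> Kc * \<mu>)\<bar>
           \<le> ((4 * L + 40 * D) * 16 * B\<^sup>2 + 4 * D * B * (K + 1)) * (lam / lam0) powr \<eta> Kp"
proof -
  define F where "F \<sigma> = (\<Sum>k<K-1. lam powr \<eta> (Suc k) * ang_part (P (Suc k) \<sigma>) x)" for \<sigma>
  define C1 where "C1 = (4 * L + 40 * D) * 16 * B\<^sup>2 + 4 * D * B"
  have "0 \<le> L" using lip[of 1 0] by simp
  moreover have "0 \<le> D" using g'_bound[of 0] by simp
  ultimately have C1: "0 \<le> C1" using B_nonneg by (simp add: C1_def)
  have g_meas: "g \<in> borel_measurable borel"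
    using g' by (intro borel_measurable_continuous_onI continuous_at_imp_continuous_on) (auto intro: DERIV_isCont)
  have F_integrable: "integrable p F"
    unfolding F_def using integrable_bounded_linear[OF bounded_linear_ang_part integrable_P] by simp
  have "\<bar>markov_op p S g x - g x - g' x * expectation F\<bar> = \<bar>expectation (\<lambda>\<sigma>. g (S \<sigma> x) - g x - g' x * F \<sigma>)\<bar>"
    using integrable_S_at[OF S_meas g_meas g_bound] F_integrable by (simp add: markov_op_def prob_space)
  also have "\<dots> \<le> C1 * (lam / lam0) powr \<eta> K"
  proof (rule abs_integral_le_const)
    show "(\<lambda>\<sigma>. g (S \<sigma> x) - g x - g' x * F \<sigma>) \<in> borel_measurable p"
      using measurable_S_at[OF S_meas] g_meas F_integrable by (auto simp: borel_measurable_integrable)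
    fix \<sigma> assume \<sigma>: "\<sigma> \<in> space p"
    then obtain s where "s \<in> {1, -1}" "S \<sigma> = Smap (s *\<^sub>R mexp (generator lam \<sigma>))"
      using S_eq by blast
    then show "\<bar>g (S \<sigma> x) - g x - g' x * F \<sigma>\<bar> \<le> C1 * (lam / lam0) powr \<eta> K"
      using Smap_generator_step[OF g' lip per g'_bound lam small \<sigma>] by (simp add: C1_def F_def)
  qed
  also have "\<dots> \<le> C1 * (lam / lam0) powr \<eta> Kp"
    using lam lam0_pos Kp_gt Kp_le Kc_range C1 by (intro mult_left_mono powr_mono' eta_le) auto
  finally have "\<bar>markov_op p S g x - g x - g' x * expectation F\<bar> \<le> C1 * (lam / lam0) powr \<eta> Kp" .
  moreover have "\<bar>g' x * expectation F - g' x * (lam powr \<eta> Kc * \<mu>)\<bar> \<le> D * (4 * B * K * (lam / lam0) powr \<eta> Kp)"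
    unfolding right_diff_distrib[symmetric] abs_mult
    using g'_bound[of x] expectation_truncated_ang_part[OF lam, of x]
    by (intro mult_mono) (auto simp: F_def[abs_def])
  ultimately show ?thesis by (simp add: C1_def algebra_simps)
qed

lemma small_parameter:
  obtains lam1 where "0 < lam1" "lam1 \<le> lam0"
    "\<And>lam. 0 < lam \<Longrightarrow> lam < lam1 \<Longrightarrow> 4 * (lam / lam0) powr \<eta> 1 * B \<le> 1/50"
proof
  define \<epsilon> where "\<epsilon> = 1 / (200 * (B + 1))"
  have \<epsilon>: "0 < \<epsilon>" "\<epsilon> \<le> 1" using B_nonneg by (auto simp: \<epsilon>_def)
  show "0 < lam0 * \<epsilon> powr (1 / \<eta> 1)" using lam0_pos \<epsilon> by simp
  show "lam0 * \<epsilon> powr (1 / \<eta> 1) \<le> lam0"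
    using lam0_pos \<epsilon> eta_pos by (simp add: mult_left_le powr_le1)
  fix lam assume "0 < lam" "lam < lam0 * \<epsilon> powr (1 / \<eta> 1)"
  then have "(lam / lam0) powr \<eta> 1 < (\<epsilon> powr (1 / \<eta> 1)) powr \<eta> 1"
    using lam0_pos eta_pos by (intro powr_less_mono2) (auto simp: divide_less_eq mult.commute)
  also have "\<dots> = \<epsilon>" using eta_pos \<epsilon> by (simp add: powr_powr)
  finally have "4 * (lam / lam0) powr \<eta> 1 * B \<le> 4 * \<epsilon> * B"
    using B_nonneg by (simp add: mult_right_mono)
  also have "\<dots> \<le> 1/50" using B_nonneg by (simp add: \<epsilon>_def field_simps)
  finally show "4 * (lam / lam0) powr \<eta> 1 * B \<le> 1/50" .
qed

lemma I_N_bound_at: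
  fixes f g :: "real \<Rightarrow> real" and S :: "'s \<Rightarrow> real \<Rightarrow> real"
  assumes g': "\<And>u. (g has_real_derivative (f u - m) / \<mu>) (at u)" and per: "\<And>u. g (u + pi) = g u"
    and lip: "\<And>a b. \<bar>(f a - m) / \<mu> - (f b - m) / \<mu>\<bar> \<le> L * \<bar>a - b\<bar>"
    and D: "\<And>u. \<bar>(f u - m) / \<mu>\<bar> \<le> D" and Cg: "\<And>u. \<bar>g u\<bar> \<le> Cg"
    and f_meas: "f \<in> borel_measurable borel" and Cf: "\<And>u. \<bar>f u\<bar> \<le> Cf" and mu_nz: "\<mu> \<noteq> 0"
    and S_meas: "(\<lambda>(\<sigma>, x). S \<sigma> x) \<in> borel_measurable (p \<Otimes>\<^sub>M borel)"
    and S_eq: "\<And>\<sigma>. \<sigma> \<in> space p \<Longrightarrow> \<exists>s\<in>{1, -1}. S \<sigma> = Smap (s *\<^sub>R mexp (generator lam \<sigma>))"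
    and lam: "0 < lam" "lam \<le> lam0" and small: "4 * (lam / lam0) powr \<eta> 1 * B \<le> 1/50"
    and N: "1 \<le> N"
  shows "\<bar>I_N p S \<theta>0 f N - m\<bar> \<le> 2 * Cg / (lam powr \<eta> Kc * N)
           + ((4 * L + 40 * D) * 16 * B\<^sup>2 + 4 * D * B * (K + 1)) / lam0 powr \<eta> Kp * lam powr (\<eta> Kp - \<eta> Kc)"
proof -
  define C0 where "C0 = (4 * L + 40 * D) * 16 * B\<^sup>2 + 4 * D * B * (K + 1)"
  have g_meas: "g \<in> borel_measurable borel"
    using g' by (intro borel_measurable_continuous_onI continuous_at_imp_continuous_on) (auto intro: DERIV_isCont)
  have "\<bar>markov_op p S g x - g x - lam powr \<eta> Kc * (f x - m)\<bar> \<le> C0 / lam0 powr \<eta> Kp * lam powr \<eta> Kp" for x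
  proof -
    have "(f x - m) / \<mu> * (lam powr \<eta> Kc * \<mu>) = lam powr \<eta> Kc * (f x - m)"
      using mu_nz by simp
    then have "\<bar>markov_op p S g x - g x - lam powr \<eta> Kc * (f x - m)\<bar> \<le> C0 * (lam / lam0) powr \<eta> Kp"
      using markov_op_drift[OF g' lip per D Cg S_meas S_eq lam small, of x] unfolding C0_def by simp
    also have "\<dots> = C0 / lam0 powr \<eta> Kp * lam powr \<eta> Kp"
      using lam lam0_pos by (simp add: powr_divide)
    finally show ?thesis .
  qed
  then have "\<bar>I_N p S \<theta>0 f N - m\<bar>
      \<le> 2 * Cg / (lam powr \<eta> Kc * N) + C0 / lam0 powr \<eta> Kp * lam powr \<eta> Kp / lam powr \<eta> Kc"
    using lam N by (intro I_N_poisson_bound[OF S_meas f_meas Cf g_meas Cg]) auto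
  then show ?thesis
    using lam by (simp add: C0_def powr_diff)
qed

theorem I_N_estimate:
  fixes f :: "real \<Rightarrow> real" and S :: "real \<Rightarrow> 's \<Rightarrow> real \<Rightarrow> real"
  assumes f_C1: "f C1_differentiable_on UNIV" and f_per: "\<And>\<theta>. f (\<theta> + pi) = f \<theta>" and mu_nz: "\<mu> \<noteq> 0"
    and S_meas: "\<And>lam. (\<lambda>(\<sigma>, x). S lam \<sigma> x) \<in> borel_measurable (p \<Otimes>\<^sub>M borel)"
    and S_eq: "\<And>lam \<sigma>. lam \<in> {0..lam0} \<Longrightarrow> \<sigma> \<in> space p \<Longrightarrow>
      \<exists>s\<in>{1, -1}. S lam \<sigma> = Smap (s *\<^sub>R mexp (generator lam \<sigma>))"
  shows "\<exists>C lam1. 0 < lam1 \<and> (\<forall>lam\<in>{0<..<lam1}. \<forall>N\<ge>1.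
           \<bar>I_N p (S lam) \<theta>0 f N - integral {0..pi} (\<lambda>\<theta>. f \<theta> / pi)\<bar>
             \<le> C * (lam powr (\<eta> Kp - \<eta> Kc) + 1 / (lam powr \<eta> Kc * real N)))"
proof -
  define m where "m = integral {0..pi} (\<lambda>\<theta>. f \<theta> / pi)"
  obtain g L D Cg where g': "\<And>u. (g has_real_derivative (f u - m) / \<mu>) (at u)" and per: "\<And>u. g (u + pi) = g u"
    and lip: "\<And>a b. \<bar>(f a - m) / \<mu> - (f b - m) / \<mu>\<bar> \<le> L * \<bar>a - b\<bar>"
    and D: "\<And>u. \<bar>(f u - m) / \<mu>\<bar> \<le> D" and Cg: "\<And>u. \<bar>g u\<bar> \<le> Cg"
    using C1_periodic_corrector[OF f_C1 f_per] unfolding m_def by blast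
  have f_cont: "continuous_on UNIV f"
    using f_C1 by (rule C1_differentiable_imp_continuous_on)
  obtain Cf where Cf: "\<And>u. \<bar>f u\<bar> \<le> Cf"
    using periodic_continuous_bounded[OF f_cont f_per] by blast
  obtain lam1 where lam1: "0 < lam1" "lam1 \<le> lam0"
    and small: "\<And>lam. 0 < lam \<Longrightarrow> lam < lam1 \<Longrightarrow> 4 * (lam / lam0) powr \<eta> 1 * B \<le> 1/50"
    by (rule small_parameter) blast
  define E where "E = ((4 * L + 40 * D) * 16 * B\<^sup>2 + 4 * D * B * (K + 1)) / lam0 powr \<eta> Kp"
  have "0 \<le> L" using order_trans[OF abs_ge_zero lip[of 1 0]] by simp
  moreover have "0 \<le> D" using order_trans[OF abs_ge_zero D[of 0]] .
  ultimately have E: "0 \<le> E"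
    unfolding E_def using B_nonneg by (intro divide_nonneg_nonneg add_nonneg_nonneg mult_nonneg_nonneg) auto
  have Cg0: "0 \<le> Cg" using order_trans[OF abs_ge_zero Cg[of 0]] .
  have "\<bar>I_N p (S lam) \<theta>0 f N - m\<bar> \<le> (2 * Cg + E) * (lam powr (\<eta> Kp - \<eta> Kc) + 1 / (lam powr \<eta> Kc * N))"
    if lam: "0 < lam" "lam < lam1" and N: "1 \<le> N" for lam N
  proof -
    have "\<bar>I_N p (S lam) \<theta>0 f N - m\<bar> \<le> 2 * Cg * (1 / (lam powr \<eta> Kc * N)) + E * lam powr (\<eta> Kp - \<eta> Kc)"
      using I_N_bound_at[OF g' per lip D Cg borel_measurable_continuous_onI[OF f_cont] Cf mu_nz S_meas S_eq
          _ _ small[OF lam] N] lam lam1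
      by (simp add: E_def)
    moreover have "0 \<le> Cg * lam powr (\<eta> Kp - \<eta> Kc)" "0 \<le> E * (1 / (lam powr \<eta> Kc * N))"
      using Cg0 E by simp_all
    ultimately show ?thesis by (simp add: ring_distribs add_divide_distrib)
  qed
  then show ?thesis
    using lam1 unfolding m_def by (intro exI[of _ "2 * Cg + E"] exI[of _ lam1]) auto
qed

end

theorem proposition1:
  fixes p :: "'s measure"
    and T :: "real \<Rightarrow> 's \<Rightarrow> mat2"
    and M :: mat2
    and \<eta> :: "nat \<Rightarrow> real"
    and P :: "nat \<Rightarrow> 's \<Rightarrow> mat2"
    and K Kc :: nat
    and \<mu> \<theta>0 :: real
    and f :: "real \<Rightarrow> real"
  assumes prob: "prob_space p"
    and T_meas: "\<And>lam. T lam \<in> borel_measurable p"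
    and P_meas: "\<And>k. P k \<in> borel_measurable p"
    and T_SL2: "\<And>lam \<sigma>. det (T lam \<sigma>) = 1"
    and M_SL2: "det M = 1"
    and eta_pos: "0 < \<eta> 1"
    and eta_mono: "\<And>k. 1 \<le> k \<Longrightarrow> \<eta> k < \<eta> (Suc k)"
    and P_sl2: "\<And>k \<sigma>. trace (P k \<sigma>) = 0"
    and expansion: "\<exists>lam0>0. \<exists>C B.
        (\<forall>lam\<in>{0..lam0}. \<forall>\<sigma>\<in>space p. norm (T lam \<sigma>) \<le> C)
      \<and> (\<forall>\<sigma>\<in>space p. summable (\<lambda>k. lam0 powr \<eta> (Suc k) * norm (P (Suc k) \<sigma>))
                     \<and> (\<Sum>k. lam0 powr \<eta> (Suc k) * norm (P (Suc k) \<sigma>)) \<le> B)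
      \<and> (\<forall>lam\<in>{0..lam0}. \<forall>\<sigma>\<in>space p. \<exists>s\<in>{1, -1::real}.
           M ** T lam \<sigma> ** matrix_inv M
             = s *\<^sub>R mexp (\<Sum>k. (lam powr \<eta> (Suc k)) *\<^sub>R P (Suc k) \<sigma>))"
    and K_twice: "\<eta> K = 2 * \<eta> 1"
    and K_next: "\<eta> (Suc K) \<le> \<eta> 1 + \<eta> 2"
    and P_nontriv: "\<And>k. 1 \<le> k \<Longrightarrow> k < K \<Longrightarrow> measure p {\<sigma>\<in>space p. P k \<sigma> = 0} < 1"
    and Kc_range: "1 \<le> Kc" "Kc < K"
    and E_zero: "\<And>k. 1 \<le> k \<Longrightarrow> k < Kc \<Longrightarrow> integral\<^sup>L p (P k) = 0"
    and E_Kc_nz: "integral\<^sup>L p (P Kc) \<noteq> 0"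
    and elliptic: "det (integral\<^sup>L p (P Kc)) > 0"
    and mu_const: "\<And>\<theta>. integral\<^sup>L p (\<lambda>\<sigma>. pfun (P Kc \<sigma>) \<theta>) = \<mu>"
    and mu_nz: "\<mu> \<noteq> 0"
    and f_C1: "f C1_differentiable_on UNIV"
    and f_per: "\<And>\<theta>. f (\<theta> + pi) = f \<theta>"
  shows "\<exists>C lam1. 0 < lam1 \<and>
     (\<forall>lam\<in>{0<..<lam1}. \<forall>N\<ge>1.
        \<bar>I_N p (%\<sigma>. Smap (M ** T lam \<sigma> ** matrix_inv M)) \<theta>0 f N
          - integral {0..pi} (\<lambda>\<theta>. f \<theta> / pi)\<bar>
        \<le> C * (lam powr (\<eta> (LEAST k. Kc < k \<and> (integral\<^sup>L p (P k) \<noteq> 0 \<or> k = K)) - \<eta> Kc)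
               + 1 / (lam powr \<eta> Kc * real N)))"
proof -
  from expansion obtain lam0 C B where lam0: "0 < lam0"
    and P_series: "\<forall>\<sigma>\<in>space p. summable (\<lambda>k. lam0 powr \<eta> (Suc k) * norm (P (Suc k) \<sigma>))
      \<and> (\<Sum>k. lam0 powr \<eta> (Suc k) * norm (P (Suc k) \<sigma>)) \<le> B"
    and T_exp: "\<forall>lam\<in>{0..lam0}. \<forall>\<sigma>\<in>space p. \<exists>s\<in>{1, -1::real}.
      M ** T lam \<sigma> ** matrix_inv M = s *\<^sub>R mexp (\<Sum>k. (lam powr \<eta> (Suc k)) *\<^sub>R P (Suc k) \<sigma>)"
    by blast
  interpret first_order_anomaly p \<eta> P K Kc \<mu> lam0 B
    using prob P_meas eta_pos eta_mono P_sl2 lam0 P_series K_twice Kc_range E_zero mu_const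
    by (intro first_order_anomaly.intro first_order_anomaly_axioms.intro) auto
  have S_eq: "\<exists>s\<in>{1, -1}. Smap (M ** T lam \<sigma> ** matrix_inv M) = Smap (s *\<^sub>R mexp (generator lam \<sigma>))"
    if range: "lam \<in> {0..lam0}" "\<sigma> \<in> space p" for lam \<sigma>
  proof -
    obtain s where "s \<in> {1, -1}"
      "M ** T lam \<sigma> ** matrix_inv M = s *\<^sub>R mexp (\<Sum>k. (lam powr \<eta> (Suc k)) *\<^sub>R P (Suc k) \<sigma>)"
      using T_exp[rule_format, OF range] by blast
    then show ?thesis unfolding generator_def by (intro bexI[of _ s]) simp_all
  qed
  have S_meas: "(\<lambda>(\<sigma>, x). Smap (M ** T lam \<sigma> ** matrix_inv M) x) \<in> borel_measurable (p \<Otimes>\<^sub>M borel)" for lam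
    using T_meas by (rule measurable_Smap_conj)
  from I_N_estimate[where S = "\<lambda>lam \<sigma>. Smap (M ** T lam \<sigma> ** matrix_inv M)", OF f_C1 f_per mu_nz S_meas S_eq]
  show ?thesis unfolding Kp_def .
qed

end
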